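(* Let $\mathcal{C}$ be a deflation-exact category and $\mathcal{A}$ an admissibly deflation-percolating subcategory. (1) Consider a commutative diagram $$\begin{array}{ccccc} X&\rightarrowtail&Y&\twoheadrightarrow&Z\\ \downarrow{\scriptstyle f}&&\downarrow{\scriptstyle g}&&\downarrow{\scriptstyle h}\\ X'&\rightarrowtail&Y'&\twoheadrightarrow&Z'\end{array}$$ whose rows are conflations and where $f$ and $h$ are inflations. (a) If $f$ is an $\mathcal{A}^{-1}$-inflation, then $g$ is an inflation. (b) If additionally $h$ is an $\mathcal{A}^{-1}$-inflation, then $g$ is an $\mathcal{A}^{-1}$-inflation. (2) Consider a commutative diagram of the same shape whose rows are conflations and where $f$ and $h$ are deflations. (a) If $f$ is an $\mathcal{A}^{-1}$-deflation, then $g$ is a deflation. (b) If additionally $h$ is an $\mathcal{A}^{-1}$-deflation, then $g$ is an $\mathcal{A}^{-1}$-deflation.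
   Context: A conflation category is an additive category with a class of kernel-cokernel pairs (closed under isomorphisms) called conflations; first map an inflation, second a deflation. A deflation-exact category is a conflation category satisfying: (R0) $1_0$ is a deflation; (R1) composites of deflations are deflations; (R2) pullbacks of deflations along arbitrary morphisms exist and are deflations. A non-empty full subcategory $\mathcal{A}$ is admissibly deflation-percolating if: (A1) for every conflation $A'\rightarrowtail A\twoheadrightarrow A''$, $A\in\mathcal{A}$ iff $A',A''\in\mathcal{A}$; (A2) every morphism $C\to A$ with $A\in\mathcal{A}$ factors as a deflation $C\twoheadrightarrow A'$ followed by an inflation $A'\rightarrowtail A$ with $A'\in\mathcal{A}$; (A3) if $a\colon C\rightarrowtail D$ is an inflation and $b\colon C\twoheadrightarrow A$ a deflation with $A\in\mathcal{A}$, the pushout of $a$ along $b$ exists and yields a deflation $D\twoheadrightarrow P$ and an inflation $A\rightarrowtail P$. An $\mathcal{A}^{-1}$-inflation is an inflation with cokernel in $\mathcal{A}$; an $\mathcal{A}^{-1}$-deflation is a deflation with kernel in $\mathcal{A}$. *)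

theory Defs
  imports Main
begin

text \<open>A category with additive structure and a distinguished class of conflations.
  Morphisms carry source/target; composition cmp C g f means g after f.\<close>

record ('o,'m) ccat =
  obj :: "'o set"
  mor :: "'m set"
  src :: "'m \<Rightarrow> 'o"
  tgt :: "'m \<Rightarrow> 'o"
  ident :: "'o \<Rightarrow> 'm"
  cmp :: "'m \<Rightarrow> 'm \<Rightarrow> 'm"
  madd :: "'m \<Rightarrow> 'm \<Rightarrow> 'm"
  mzero :: "'o \<Rightarrow> 'o \<Rightarrow> 'm"
  mneg :: "'m \<Rightarrow> 'm"
  conflations :: "('m \<times> 'm) set"

definition hom :: "('o,'m) ccat \<Rightarrow> 'o \<Rightarrow> 'o \<Rightarrow> 'm set" where
  "hom C X Y = {f \<in> mor C. src C f = X \<and> tgt C f = Y}"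

definition category :: "('o,'m) ccat \<Rightarrow> bool" where
  "category C \<longleftrightarrow>
     (\<forall>f\<in>mor C. src C f \<in> obj C \<and> tgt C f \<in> obj C)
   \<and> (\<forall>X\<in>obj C. ident C X \<in> hom C X X)
   \<and> (\<forall>f g. f \<in> mor C \<longrightarrow> g \<in> mor C \<longrightarrow> tgt C f = src C g \<longrightarrow>
          cmp C g f \<in> hom C (src C f) (tgt C g))
   \<and> (\<forall>f g h. f \<in> mor C \<longrightarrow> g \<in> mor C \<longrightarrow> h \<in> mor C \<longrightarrow>
          tgt C f = src C g \<longrightarrow> tgt C g = src C h \<longrightarrow>
          cmp C h (cmp C g f) = cmp C (cmp C h g) f)
   \<and> (\<forall>f\<in>mor C. cmp C (ident C (tgt C f)) f = f \<and> cmp C f (ident C (src C f)) = f)"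

definition preadditive :: "('o,'m) ccat \<Rightarrow> bool" where
  "preadditive C \<longleftrightarrow> category C
   \<and> (\<forall>X\<in>obj C. \<forall>Y\<in>obj C.
        mzero C X Y \<in> hom C X Y
      \<and> (\<forall>f\<in>hom C X Y. \<forall>g\<in>hom C X Y. madd C f g \<in> hom C X Y \<and> madd C f g = madd C g f)
      \<and> (\<forall>f\<in>hom C X Y. \<forall>g\<in>hom C X Y. \<forall>h\<in>hom C X Y.
           madd C (madd C f g) h = madd C f (madd C g h))
      \<and> (\<forall>f\<in>hom C X Y. madd C f (mzero C X Y) = f
           \<and> mneg C f \<in> hom C X Y \<and> madd C f (mneg C f) = mzero C X Y))
   \<and> (\<forall>X\<in>obj C. \<forall>Y\<in>obj C. \<forall>W\<in>obj C. \<forall>f\<in>hom C X Y. \<forall>g\<in>hom C X Y.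
        (\<forall>h\<in>hom C Y W. cmp C h (madd C f g) = madd C (cmp C h f) (cmp C h g))
      \<and> (\<forall>k\<in>hom C W X. cmp C (madd C f g) k = madd C (cmp C f k) (cmp C g k)))"

definition zero_object :: "('o,'m) ccat \<Rightarrow> 'o \<Rightarrow> bool" where
  "zero_object C Z \<longleftrightarrow> Z \<in> obj C \<and>
     (\<forall>X\<in>obj C. (\<exists>!f. f \<in> hom C Z X) \<and> (\<exists>!f. f \<in> hom C X Z))"

definition biproduct :: "('o,'m) ccat \<Rightarrow> 'o \<Rightarrow> 'o \<Rightarrow> 'o \<Rightarrow> 'm \<Rightarrow> 'm \<Rightarrow> 'm \<Rightarrow> 'm \<Rightarrow> bool" where
  "biproduct C A B S p1 p2 i1 i2 \<longleftrightarrow> S \<in> obj C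
     \<and> p1 \<in> hom C S A \<and> p2 \<in> hom C S B \<and> i1 \<in> hom C A S \<and> i2 \<in> hom C B S
     \<and> cmp C p1 i1 = ident C A \<and> cmp C p2 i2 = ident C B
     \<and> cmp C p2 i1 = mzero C A B \<and> cmp C p1 i2 = mzero C B A
     \<and> madd C (cmp C i1 p1) (cmp C i2 p2) = ident C S"

definition additive :: "('o,'m) ccat \<Rightarrow> bool" where
  "additive C \<longleftrightarrow> preadditive C \<and> (\<exists>Z. zero_object C Z)
     \<and> (\<forall>A\<in>obj C. \<forall>B\<in>obj C. \<exists>S p1 p2 i1 i2. biproduct C A B S p1 p2 i1 i2)"

definition is_kernel :: "('o,'m) ccat \<Rightarrow> 'm \<Rightarrow> 'm \<Rightarrow> bool" where
  "is_kernel C i p \<longleftrightarrow> (\<exists>K Y Z. i \<in> hom C K Y \<and> p \<in> hom C Y Z \<and> cmp C p i = mzero C K Z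
     \<and> (\<forall>W t. W \<in> obj C \<longrightarrow> t \<in> hom C W Y \<longrightarrow> cmp C p t = mzero C W Z \<longrightarrow>
          (\<exists>!u. u \<in> hom C W K \<and> cmp C i u = t)))"

definition is_cokernel :: "('o,'m) ccat \<Rightarrow> 'm \<Rightarrow> 'm \<Rightarrow> bool" where
  "is_cokernel C p i \<longleftrightarrow> (\<exists>K Y Z. i \<in> hom C K Y \<and> p \<in> hom C Y Z \<and> cmp C p i = mzero C K Z
     \<and> (\<forall>W t. W \<in> obj C \<longrightarrow> t \<in> hom C Y W \<longrightarrow> cmp C t i = mzero C K W \<longrightarrow>
          (\<exists>!u. u \<in> hom C Z W \<and> cmp C u p = t)))"

definition kernel_cokernel_pair :: "('o,'m) ccat \<Rightarrow> 'm \<Rightarrow> 'm \<Rightarrow> bool" where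
  "kernel_cokernel_pair C i p \<longleftrightarrow> is_kernel C i p \<and> is_cokernel C p i"

definition iso :: "('o,'m) ccat \<Rightarrow> 'm \<Rightarrow> bool" where
  "iso C f \<longleftrightarrow> f \<in> mor C \<and> (\<exists>g\<in>hom C (tgt C f) (src C f).
      cmp C g f = ident C (src C f) \<and> cmp C f g = ident C (tgt C f))"

definition conflation_category :: "('o,'m) ccat \<Rightarrow> bool" where
  "conflation_category C \<longleftrightarrow> additive C
   \<and> (\<forall>(i,p)\<in>conflations C. kernel_cokernel_pair C i p)
   \<and> (\<forall>i p i' p' a b c. (i,p) \<in> conflations C \<longrightarrow>
        i' \<in> hom C (src C i') (tgt C i') \<longrightarrow> p' \<in> hom C (tgt C i') (tgt C p') \<longrightarrow>
        iso C a \<longrightarrow> iso C b \<longrightarrow> iso C c \<longrightarrow>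
        a \<in> hom C (src C i) (src C i') \<longrightarrow> b \<in> hom C (tgt C i) (tgt C i') \<longrightarrow>
        c \<in> hom C (tgt C p) (tgt C p') \<longrightarrow>
        cmp C b i = cmp C i' a \<longrightarrow> cmp C c p = cmp C p' b \<longrightarrow>
        (i',p') \<in> conflations C)"

definition inflation :: "('o,'m) ccat \<Rightarrow> 'm \<Rightarrow> bool" where
  "inflation C i \<longleftrightarrow> (\<exists>p. (i,p) \<in> conflations C)"

definition deflation :: "('o,'m) ccat \<Rightarrow> 'm \<Rightarrow> bool" where
  "deflation C p \<longleftrightarrow> (\<exists>i. (i,p) \<in> conflations C)"

definition is_pullback :: "('o,'m) ccat \<Rightarrow> 'm \<Rightarrow> 'm \<Rightarrow> 'm \<Rightarrow> 'm \<Rightarrow> bool" where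
  "is_pullback C p f p' f' \<longleftrightarrow> (\<exists>B D E P.
     p \<in> hom C B D \<and> f \<in> hom C E D \<and> p' \<in> hom C P E \<and> f' \<in> hom C P B
   \<and> cmp C p f' = cmp C f p'
   \<and> (\<forall>W u v. W \<in> obj C \<longrightarrow> u \<in> hom C W B \<longrightarrow> v \<in> hom C W E \<longrightarrow> cmp C p u = cmp C f v \<longrightarrow>
        (\<exists>!w. w \<in> hom C W P \<and> cmp C f' w = u \<and> cmp C p' w = v)))"

definition is_pushout :: "('o,'m) ccat \<Rightarrow> 'm \<Rightarrow> 'm \<Rightarrow> 'm \<Rightarrow> 'm \<Rightarrow> bool" where
  "is_pushout C a b a' b' \<longleftrightarrow> (\<exists>B D E P.
     a \<in> hom C B D \<and> b \<in> hom C B E \<and> a' \<in> hom C E P \<and> b' \<in> hom C D P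
   \<and> cmp C b' a = cmp C a' b
   \<and> (\<forall>W u v. W \<in> obj C \<longrightarrow> u \<in> hom C D W \<longrightarrow> v \<in> hom C E W \<longrightarrow> cmp C u a = cmp C v b \<longrightarrow>
        (\<exists>!w. w \<in> hom C P W \<and> cmp C w b' = u \<and> cmp C w a' = v)))"

definition deflation_exact :: "('o,'m) ccat \<Rightarrow> bool" where
  "deflation_exact C \<longleftrightarrow> conflation_category C
   \<and> (\<forall>Z. zero_object C Z \<longrightarrow> deflation C (ident C Z))
   \<and> (\<forall>p q. deflation C p \<longrightarrow> deflation C q \<longrightarrow> tgt C p = src C q \<longrightarrow> deflation C (cmp C q p))
   \<and> (\<forall>p f. deflation C p \<longrightarrow> f \<in> mor C \<longrightarrow> tgt C f = tgt C p \<longrightarrow>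
        (\<exists>p' f'. is_pullback C p f p' f' \<and> deflation C p'))"

definition admissibly_deflation_percolating :: "('o,'m) ccat \<Rightarrow> 'o set \<Rightarrow> bool" where
  "admissibly_deflation_percolating C A \<longleftrightarrow> A \<subseteq> obj C \<and> A \<noteq> {}
   \<and> (\<forall>(i,p)\<in>conflations C. tgt C i \<in> A \<longleftrightarrow> (src C i \<in> A \<and> tgt C p \<in> A))
   \<and> (\<forall>f\<in>mor C. tgt C f \<in> A \<longrightarrow> (\<exists>e m. deflation C e \<and> inflation C m
        \<and> src C e = src C f \<and> tgt C e = src C m \<and> tgt C m = tgt C f \<and> src C m \<in> A
        \<and> cmp C m e = f))
   \<and> (\<forall>a b. inflation C a \<longrightarrow> deflation C b \<longrightarrow> src C a = src C b \<longrightarrow> tgt C b \<in> A \<longrightarrow>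
        (\<exists>a' b'. is_pushout C a b a' b' \<and> deflation C b' \<and> inflation C a'))"

definition A_inflation :: "('o,'m) ccat \<Rightarrow> 'o set \<Rightarrow> 'm \<Rightarrow> bool" where
  "A_inflation C A i \<longleftrightarrow> (\<exists>p. (i,p) \<in> conflations C \<and> tgt C p \<in> A)"

definition A_deflation :: "('o,'m) ccat \<Rightarrow> 'o set \<Rightarrow> 'm \<Rightarrow> bool" where
  "A_deflation C A p \<longleftrightarrow> (\<exists>i. (i,p) \<in> conflations C \<and> src C i \<in> A)"

end

(*
  The comparison morphism g factors as g = h' \<cdot> g1 through the pullback Q of p' along h.
  Here g1 is a morphism from the conflation X \<rightarrow> Y \<rightarrow> Z to a conflation X' \<rightarrow> Q \<rightarrow> Z that
  is the identity on Z, and h' is a pullback of h, so h' inherits from h the property of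
  being an (A^-1-)inflation or an (A^-1-)deflation.

  If f is an A^-1-inflation with cokernel A0, pushing X' \<rightarrow> Q out
  along X' \<rightarrow> A0 gives a conflation A0 \<rightarrow> P \<rightarrow> Z that splits, because Q \<rightarrow> P kills the
  kernel of Y \<rightarrow> Z; the short five lemma then identifies g1 with the kernel of the induced
  deflation Q \<rightarrow> P \<rightarrow> A0. If f is an A^-1-deflation with kernel j : K \<rightarrow> X, the composite
  X \<oplus> Y \<rightarrow> Y \<rightarrow> Q is a deflation with kernel X \<oplus> K, and pushing this kernel out along
  the projection onto K, an object of A (axiom A3), shows that i \<cdot> j is an inflation;
  its cokernel is g1.

  Finally, an inflation after an A^-1-inflation is an inflation (push the inflation out
  along the cokernel of the A^-1-inflation, again by A3), and A^-1-deflations compose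
  because the kernels of g, h \<cdot> g and h form a conflation.
*)

theory Submission
  imports Defs
begin

locale percolating_deflation_exact =
  fixes C :: "('o,'m) ccat" and A :: "'o set"
  assumes deflation_exact: "deflation_exact C"
    and percolating: "admissibly_deflation_percolating C A"
begin

abbreviation cp (infixr "\<cdot>" 70) where "g \<cdot> f \<equiv> cmp C g f"
abbreviation ad (infixl "\<oplus>" 65) where "f \<oplus> g \<equiv> madd C f g"
abbreviation ng ("\<ominus>_" [81] 80) where "\<ominus>f \<equiv> mneg C f"
abbreviation "sr \<equiv> src C"
abbreviation "tg \<equiv> tgt C"
abbreviation "Mor \<equiv> mor C"
abbreviation "Ob \<equiv> obj C"
abbreviation "zr \<equiv> mzero C"
abbreviation "idn \<equiv> ident C"
abbreviation "Hom \<equiv> hom C"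
abbreviation "Conf \<equiv> conflations C"

section \<open>Additive structure\<close>

lemma in_hom_iff: "f \<in> Hom X Y \<longleftrightarrow> f \<in> Mor \<and> sr f = X \<and> tg f = Y"
  by (auto simp: hom_def)

lemma is_conflation_category: "conflation_category C"
  using deflation_exact by (simp add: deflation_exact_def)

lemma is_additive: "additive C"
  using is_conflation_category by (simp add: conflation_category_def)

lemma is_preadditive: "preadditive C"
  using is_additive by (simp add: additive_def)

lemma is_category: "category C"
  using is_preadditive by (simp add: preadditive_def)

lemma src_in_obj [simp]: "f \<in> Mor \<Longrightarrow> sr f \<in> Ob"
  and tgt_in_obj [simp]: "f \<in> Mor \<Longrightarrow> tg f \<in> Ob"
  using is_category by (simp_all add: category_def)

lemma ident_typing [simp]:
  assumes "X \<in> Ob"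
  shows "idn X \<in> Mor" "sr (idn X) = X" "tg (idn X) = X"
  using is_category assms by (auto simp: category_def hom_def)

lemma cmp_typing [simp]:
  assumes "f \<in> Mor" "g \<in> Mor" "tg f = sr g"
  shows "g \<cdot> f \<in> Mor" "sr (g \<cdot> f) = sr f" "tg (g \<cdot> f) = tg g"
  using is_category assms unfolding category_def hom_def by blast+

lemma zero_typing [simp]:
  assumes "X \<in> Ob" "Y \<in> Ob"
  shows "zr X Y \<in> Mor" "sr (zr X Y) = X" "tg (zr X Y) = Y"
  using is_preadditive assms unfolding preadditive_def hom_def by blast+

lemma preadditive_add:
  assumes "X \<in> Ob" "Y \<in> Ob" "f \<in> Hom X Y" "g \<in> Hom X Y"
  shows "f \<oplus> g \<in> Hom X Y \<and> f \<oplus> g = g \<oplus> f"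
  using is_preadditive assms unfolding preadditive_def by blast

lemma preadditive_assoc:
  assumes "X \<in> Ob" "Y \<in> Ob" "f \<in> Hom X Y" "g \<in> Hom X Y" "h \<in> Hom X Y"
  shows "(f \<oplus> g) \<oplus> h = f \<oplus> (g \<oplus> h)"
  using is_preadditive assms unfolding preadditive_def by blast

lemma preadditive_zero_neg:
  assumes "X \<in> Ob" "Y \<in> Ob" "f \<in> Hom X Y"
  shows "f \<oplus> zr X Y = f \<and> \<ominus>f \<in> Hom X Y \<and> f \<oplus> \<ominus>f = zr X Y"
  using is_preadditive assms unfolding preadditive_def by blast

lemma preadditive_distrib_left:
  assumes "X \<in> Ob" "Y \<in> Ob" "W \<in> Ob" "f \<in> Hom X Y" "g \<in> Hom X Y" "h \<in> Hom Y W"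
  shows "h \<cdot> (f \<oplus> g) = h \<cdot> f \<oplus> h \<cdot> g"
  using is_preadditive assms unfolding preadditive_def by blast

lemma preadditive_distrib_right:
  assumes "X \<in> Ob" "Y \<in> Ob" "W \<in> Ob" "f \<in> Hom X Y" "g \<in> Hom X Y" "k \<in> Hom W X"
  shows "(f \<oplus> g) \<cdot> k = f \<cdot> k \<oplus> g \<cdot> k"
  using is_preadditive assms unfolding preadditive_def by blast

lemma add_typing [simp]:
  assumes "f \<in> Mor" "g \<in> Mor" "sr f = sr g" "tg f = tg g"
  shows "f \<oplus> g \<in> Mor" "sr (f \<oplus> g) = sr f" "tg (f \<oplus> g) = tg f"
proof -
  have "f \<oplus> g \<in> Hom (sr f) (tg f)"
    using preadditive_add[of "sr f" "tg f" f g] assms unfolding in_hom_iff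
    by (metis src_in_obj tgt_in_obj)
  then show "f \<oplus> g \<in> Mor" "sr (f \<oplus> g) = sr f" "tg (f \<oplus> g) = tg f" by (auto simp: in_hom_iff)
qed

lemma neg_typing [simp]:
  assumes "f \<in> Mor"
  shows "\<ominus>f \<in> Mor" "sr (\<ominus>f) = sr f" "tg (\<ominus>f) = tg f"
proof -
  have "\<ominus>f \<in> Hom (sr f) (tg f)"
    using preadditive_zero_neg[of "sr f" "tg f" f] assms by (simp add: in_hom_iff)
  then show "\<ominus>f \<in> Mor" "sr (\<ominus>f) = sr f" "tg (\<ominus>f) = tg f" by (auto simp: in_hom_iff)
qed

lemma cmp_assoc [simp]:
  assumes "f \<in> Mor" "g \<in> Mor" "h \<in> Mor" "tg f = sr g" "tg g = sr h"
  shows "(h \<cdot> g) \<cdot> f = h \<cdot> (g \<cdot> f)"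
  using is_category assms unfolding category_def by metis

lemma cmp_assoc_eq:
  assumes "a \<cdot> b = c" "a \<in> Mor" "b \<in> Mor" "tg b = sr a" "x \<in> Mor" "tg x = sr b"
  shows "a \<cdot> (b \<cdot> x) = c \<cdot> x"
  using assms by (metis cmp_assoc)

lemma ident_left [simp]: "f \<in> Mor \<Longrightarrow> tg f = Y \<Longrightarrow> idn Y \<cdot> f = f"
  using is_category unfolding category_def by blast

lemma ident_right [simp]: "f \<in> Mor \<Longrightarrow> sr f = Y \<Longrightarrow> f \<cdot> idn Y = f"
  using is_category unfolding category_def by blast

lemma add_commute:
  assumes "f \<in> Mor" "g \<in> Mor" "sr f = sr g" "tg f = tg g"
  shows "f \<oplus> g = g \<oplus> f"
  using preadditive_add[of "sr f" "tg f" f g] assms unfolding in_hom_iff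
  by (metis src_in_obj tgt_in_obj)

lemma add_assoc [simp]:
  assumes "f \<in> Mor" "g \<in> Mor" "h \<in> Mor" "sr f = sr g" "tg f = tg g" "sr h = sr f" "tg h = tg f"
  shows "(f \<oplus> g) \<oplus> h = f \<oplus> (g \<oplus> h)"
  using preadditive_assoc[of "sr f" "tg f" f g h] assms by (simp add: in_hom_iff)

lemma add_zero_right [simp]: "f \<in> Mor \<Longrightarrow> sr f = X \<Longrightarrow> tg f = Y \<Longrightarrow> f \<oplus> zr X Y = f"
  using preadditive_zero_neg[of X Y f] by (auto simp: in_hom_iff)

lemma add_zero_left [simp]: "f \<in> Mor \<Longrightarrow> sr f = X \<Longrightarrow> tg f = Y \<Longrightarrow> zr X Y \<oplus> f = f"
  using add_commute[of f "zr X Y"] by auto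

lemma add_neg_right [simp]: "f \<in> Mor \<Longrightarrow> f \<oplus> \<ominus>f = zr (sr f) (tg f)"
  using preadditive_zero_neg[of "sr f" "tg f" f] by (auto simp: in_hom_iff)

lemma add_neg_left [simp]: "f \<in> Mor \<Longrightarrow> \<ominus>f \<oplus> f = zr (sr f) (tg f)"
  using add_commute[of f "\<ominus>f"] by auto

lemma cmp_distrib_left [simp]:
  assumes "f \<in> Mor" "g \<in> Mor" "sr f = sr g" "tg f = tg g" "h \<in> Mor" "sr h = tg f"
  shows "h \<cdot> (f \<oplus> g) = h \<cdot> f \<oplus> h \<cdot> g"
  using preadditive_distrib_left[of "sr f" "tg f" "tg h" f g h] assms by (simp add: in_hom_iff)

lemma cmp_distrib_right [simp]:
  assumes "f \<in> Mor" "g \<in> Mor" "sr f = sr g" "tg f = tg g" "k \<in> Mor" "tg k = sr f"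
  shows "(f \<oplus> g) \<cdot> k = f \<cdot> k \<oplus> g \<cdot> k"
  using preadditive_distrib_right[of "sr f" "tg f" "sr k" f g k] assms by (simp add: in_hom_iff)

lemma add_right_cancel:
  assumes "a \<in> Mor" "b \<in> Mor" "c \<in> Mor" "sr a = sr c" "tg a = tg c" "sr b = sr c" "tg b = tg c"
    and "a \<oplus> c = b \<oplus> c"
  shows "a = b"
proof -
  have "a = (a \<oplus> c) \<oplus> \<ominus>c" using assms(1-7) by simp
  also have "\<dots> = (b \<oplus> c) \<oplus> \<ominus>c" using assms(8) by simp
  also have "\<dots> = b" using assms(1-7) by simp
  finally show ?thesis .
qed

lemma cmp_zero_right [simp]:
  assumes "f \<in> Mor" "sr f = Y" "X \<in> Ob"
  shows "f \<cdot> zr X Y = zr X (tg f)"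
proof -
  have Y: "Y \<in> Ob" using assms src_in_obj by blast
  have "zr X Y \<oplus> zr X Y = zr X Y" using assms Y by simp
  then have "f \<cdot> zr X Y \<oplus> f \<cdot> zr X Y = f \<cdot> zr X Y" using assms Y
    by (metis cmp_distrib_left zero_typing)
  also have "\<dots> = zr X (tg f) \<oplus> f \<cdot> zr X Y" using assms Y by simp
  finally show ?thesis using assms Y add_right_cancel[of "f \<cdot> zr X Y" "zr X (tg f)" "f \<cdot> zr X Y"]
    by simp
qed

lemma cmp_zero_left [simp]:
  assumes "f \<in> Mor" "tg f = Y" "W \<in> Ob"
  shows "zr Y W \<cdot> f = zr (sr f) W"
proof -
  have Y: "Y \<in> Ob" using assms tgt_in_obj by blast
  have "zr Y W \<oplus> zr Y W = zr Y W" using assms Y by simp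
  then have "zr Y W \<cdot> f \<oplus> zr Y W \<cdot> f = zr Y W \<cdot> f" using assms Y
    by (metis cmp_distrib_right zero_typing)
  also have "\<dots> = zr (sr f) W \<oplus> zr Y W \<cdot> f" using assms Y by simp
  finally show ?thesis using assms Y add_right_cancel[of "zr Y W \<cdot> f" "zr (sr f) W" "zr Y W \<cdot> f"]
    by simp
qed

lemma neg_unique:
  assumes "a \<in> Mor" "b \<in> Mor" "sr a = sr b" "tg a = tg b" "a \<oplus> b = zr (sr a) (tg a)"
  shows "b = \<ominus>a"
  using add_right_cancel[of b "\<ominus>a" a] assms by (simp add: add_commute)

lemma cmp_neg_right [simp]:
  assumes "f \<in> Mor" "h \<in> Mor" "sr h = tg f"
  shows "h \<cdot> (\<ominus>f) = \<ominus>(h \<cdot> f)"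
proof -
  have "h \<cdot> f \<oplus> h \<cdot> (\<ominus>f) = h \<cdot> (f \<oplus> \<ominus>f)" using assms by (intro cmp_distrib_left[symmetric]) auto
  also have "\<dots> = zr (sr f) (tg h)" using assms by (simp del: cmp_distrib_left)
  finally show ?thesis using assms neg_unique[of "h \<cdot> f" "h \<cdot> (\<ominus>f)"] by simp
qed

lemma cmp_neg_left [simp]:
  assumes "f \<in> Mor" "k \<in> Mor" "tg k = sr f"
  shows "(\<ominus>f) \<cdot> k = \<ominus>(f \<cdot> k)"
proof -
  have "f \<cdot> k \<oplus> (\<ominus>f) \<cdot> k = (f \<oplus> \<ominus>f) \<cdot> k" using assms by (intro cmp_distrib_right[symmetric]) auto
  also have "\<dots> = zr (sr k) (tg f)" using assms by (simp del: cmp_distrib_right)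
  finally show ?thesis using assms neg_unique[of "f \<cdot> k" "(\<ominus>f) \<cdot> k"] by simp
qed

lemma add_neg_cancel_left [simp]:
  assumes "f \<in> Mor" "g \<in> Mor" "sr f = sr g" "tg f = tg g"
  shows "f \<oplus> (\<ominus>f \<oplus> g) = g" "\<ominus>f \<oplus> (f \<oplus> g) = g"
  using assms by (subst add_assoc[symmetric]; auto)+

lemma add_add_neg_cancel [simp]:
  assumes "a \<in> Mor" "b \<in> Mor" "sr a = sr b" "tg a = tg b"
  shows "a \<oplus> (b \<oplus> \<ominus>a) = b"
proof -
  have "b \<oplus> \<ominus>a = \<ominus>a \<oplus> b" using assms by (intro add_commute) auto
  then show ?thesis using assms by simp
qed

lemma neg_neg [simp]: "f \<in> Mor \<Longrightarrow> \<ominus>(\<ominus>f) = f"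
  by (metis add_neg_left neg_typing neg_unique)

lemma neg_zero [simp]: "X \<in> Ob \<Longrightarrow> Y \<in> Ob \<Longrightarrow> \<ominus>(zr X Y) = zr X Y"
  by (metis add_zero_left add_neg_right neg_typing zero_typing)

lemma eq_diff_of_add:
  assumes "a \<in> Mor" "b \<in> Mor" "c \<in> Mor" "sr a = sr c" "tg a = tg c" "sr b = sr c" "tg b = tg c"
    and "a \<oplus> b = c"
  shows "a = c \<oplus> \<ominus>b"
  using assms add_assoc[of a b "\<ominus>b"] by auto

lemma eq_of_diff_zero:
  assumes "a \<in> Hom X Y" "b \<in> Hom X Y" "a \<oplus> \<ominus>b = zr X Y"
  shows "a = b"
proof -
  have "a = (a \<oplus> \<ominus>b) \<oplus> b" using assms(1,2) by (simp add: in_hom_iff)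
  also have "\<dots> = zr X Y \<oplus> b" by (simp only: assms(3))
  also have "\<dots> = b" using assms(2) by (simp add: in_hom_iff)
  finally show ?thesis .
qed

section \<open>Kernels, cokernels and conflations\<close>

definition kernel :: "'m \<Rightarrow> 'm \<Rightarrow> 'o \<Rightarrow> 'o \<Rightarrow> 'o \<Rightarrow> bool" where
  "kernel k p K Y Z \<longleftrightarrow> k \<in> Hom K Y \<and> p \<in> Hom Y Z \<and> p \<cdot> k = zr K Z \<and>
     (\<forall>W t. W \<in> Ob \<longrightarrow> t \<in> Hom W Y \<longrightarrow> p \<cdot> t = zr W Z \<longrightarrow> (\<exists>!u. u \<in> Hom W K \<and> k \<cdot> u = t))"

definition cokernel :: "'m \<Rightarrow> 'm \<Rightarrow> 'o \<Rightarrow> 'o \<Rightarrow> 'o \<Rightarrow> bool" where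
  "cokernel p k K Y Z \<longleftrightarrow> k \<in> Hom K Y \<and> p \<in> Hom Y Z \<and> p \<cdot> k = zr K Z \<and>
     (\<forall>W t. W \<in> Ob \<longrightarrow> t \<in> Hom Y W \<longrightarrow> t \<cdot> k = zr K W \<longrightarrow> (\<exists>!u. u \<in> Hom Z W \<and> u \<cdot> p = t))"

lemma kernel_lift:
  assumes "kernel k p K Y Z" "t \<in> Hom W Y" "p \<cdot> t = zr W Z"
  shows "\<exists>u. u \<in> Hom W K \<and> k \<cdot> u = t"
proof -
  have "W \<in> Ob" using assms(2) by (auto simp: in_hom_iff)
  then show ?thesis using assms unfolding kernel_def by blast
qed

lemma kernel_cancel:
  assumes "kernel k p K Y Z" "u \<in> Hom W K" "v \<in> Hom W K" "k \<cdot> u = k \<cdot> v"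
  shows "u = v"
proof -
  have W: "W \<in> Ob" using assms(2) by (auto simp: in_hom_iff)
  have k: "k \<in> Hom K Y" "p \<in> Hom Y Z" "p \<cdot> k = zr K Z" using assms(1) unfolding kernel_def by auto
  have "k \<cdot> u \<in> Hom W Y" using k assms(2) by (auto simp: in_hom_iff)
  moreover have "p \<cdot> (k \<cdot> u) = zr W Z" using k assms(2) W
    by (auto simp: in_hom_iff simp flip: cmp_assoc)
  ultimately have "\<exists>!w. w \<in> Hom W K \<and> k \<cdot> w = k \<cdot> u" using assms(1) W unfolding kernel_def by blast
  then show ?thesis using assms(2-4) by auto
qed

lemma cokernel_desc:
  assumes "cokernel p k K Y Z" "t \<in> Hom Y W" "t \<cdot> k = zr K W"
  shows "\<exists>u. u \<in> Hom Z W \<and> u \<cdot> p = t"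
proof -
  have "W \<in> Ob" using assms(2) by (auto simp: in_hom_iff)
  then show ?thesis using assms unfolding cokernel_def by blast
qed

lemma cokernel_cancel:
  assumes "cokernel p k K Y Z" "u \<in> Hom Z W" "v \<in> Hom Z W" "u \<cdot> p = v \<cdot> p"
  shows "u = v"
proof -
  have W: "W \<in> Ob" using assms(2) by (auto simp: in_hom_iff)
  have k: "k \<in> Hom K Y" "p \<in> Hom Y Z" "p \<cdot> k = zr K Z" using assms(1) unfolding cokernel_def by auto
  have "u \<cdot> p \<in> Hom Y W" using k assms(2) by (auto simp: in_hom_iff)
  moreover have "(u \<cdot> p) \<cdot> k = zr K W" using k assms(2) W
    by (auto simp: in_hom_iff)
  ultimately have "\<exists>!w. w \<in> Hom Z W \<and> w \<cdot> p = u \<cdot> p"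
    using assms(1) W unfolding cokernel_def by blast
  then show ?thesis using assms(2-4) by auto
qed

lemma kernel_unique_iso:
  assumes k: "kernel k p K Y Z" and k0: "kernel k0 p K0 Y Z"
  obtains \<phi> \<psi> where "\<phi> \<in> Hom K K0" "\<psi> \<in> Hom K0 K" "\<psi> \<cdot> \<phi> = idn K" "\<phi> \<cdot> \<psi> = idn K0" "k0 \<cdot> \<phi> = k"
proof -
  have kh: "k \<in> Hom K Y" "p \<cdot> k = zr K Z" and k0h: "k0 \<in> Hom K0 Y" "p \<cdot> k0 = zr K0 Z"
    using k k0 unfolding kernel_def by auto
  have O: "K \<in> Ob" "K0 \<in> Ob" using kh k0h by (auto simp: in_hom_iff)
  obtain \<phi> where \<phi>: "\<phi> \<in> Hom K K0" "k0 \<cdot> \<phi> = k" using kernel_lift[OF k0 kh] by blast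
  obtain \<psi> where \<psi>: "\<psi> \<in> Hom K0 K" "k \<cdot> \<psi> = k0" using kernel_lift[OF k k0h] by blast
  have "k \<cdot> (\<psi> \<cdot> \<phi>) = k \<cdot> idn K" using \<phi> \<psi> kh by (simp add: in_hom_iff flip: cmp_assoc)
  then have \<psi>\<phi>: "\<psi> \<cdot> \<phi> = idn K"
    using kernel_cancel[OF k, of "\<psi> \<cdot> \<phi>" K "idn K"] \<phi> \<psi> O by (simp add: in_hom_iff)
  have "k0 \<cdot> (\<phi> \<cdot> \<psi>) = k0 \<cdot> idn K0" using \<phi> \<psi> k0h by (simp add: in_hom_iff flip: cmp_assoc)
  then have "\<phi> \<cdot> \<psi> = idn K0"
    using kernel_cancel[OF k0, of "\<phi> \<cdot> \<psi>" K0 "idn K0"] \<phi> \<psi> O by (simp add: in_hom_iff)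
  then show thesis using that \<phi> \<psi> \<psi>\<phi> by blast
qed

lemma cokernel_unique_iso:
  assumes c: "cokernel c k K Y Z" and c0: "cokernel c0 k K Y Z0"
  obtains \<phi> \<psi> where "\<phi> \<in> Hom Z0 Z" "\<psi> \<in> Hom Z Z0" "\<psi> \<cdot> \<phi> = idn Z0" "\<phi> \<cdot> \<psi> = idn Z" "\<phi> \<cdot> c0 = c"
proof -
  have ch: "c \<in> Hom Y Z" "c \<cdot> k = zr K Z" and c0h: "c0 \<in> Hom Y Z0" "c0 \<cdot> k = zr K Z0"
    using c c0 unfolding cokernel_def by auto
  have O: "Z \<in> Ob" "Z0 \<in> Ob" using ch c0h by (auto simp: in_hom_iff)
  obtain \<phi> where \<phi>: "\<phi> \<in> Hom Z0 Z" "\<phi> \<cdot> c0 = c" using cokernel_desc[OF c0 ch] by blast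
  obtain \<psi> where \<psi>: "\<psi> \<in> Hom Z Z0" "\<psi> \<cdot> c = c0" using cokernel_desc[OF c c0h] by blast
  have "(\<psi> \<cdot> \<phi>) \<cdot> c0 = idn Z0 \<cdot> c0" using \<phi> \<psi> c0h by (simp add: in_hom_iff)
  then have \<psi>\<phi>: "\<psi> \<cdot> \<phi> = idn Z0"
    using cokernel_cancel[OF c0, of "\<psi> \<cdot> \<phi>" Z0 "idn Z0"] \<phi> \<psi> O by (simp add: in_hom_iff)
  have "(\<phi> \<cdot> \<psi>) \<cdot> c = idn Z \<cdot> c" using \<phi> \<psi> ch by (simp add: in_hom_iff)
  then have "\<phi> \<cdot> \<psi> = idn Z"
    using cokernel_cancel[OF c, of "\<phi> \<cdot> \<psi>" Z "idn Z"] \<phi> \<psi> O by (simp add: in_hom_iff)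
  then show thesis using that \<phi> \<psi> \<psi>\<phi> by blast
qed

lemma conflation_kernel_cokernel_pair: "(i, p) \<in> Conf \<Longrightarrow> kernel_cokernel_pair C i p"
  using is_conflation_category unfolding conflation_category_def by blast

lemma conflationD:
  assumes "(i, p) \<in> Conf" "i \<in> Hom K Y" "p \<in> Hom Y Z"
  shows "kernel i p K Y Z" "cokernel p i K Y Z"
proof -
  have "is_kernel C i p" "is_cokernel C p i" using conflation_kernel_cokernel_pair[OF assms(1)]
    by (auto simp: kernel_cokernel_pair_def)
  then show "kernel i p K Y Z" "cokernel p i K Y Z" using assms(2,3)
    unfolding is_kernel_def is_cokernel_def kernel_def cokernel_def in_hom_iff by auto
qed

lemma conflation_typing:
  assumes "(i, p) \<in> Conf"
  shows "i \<in> Mor" "p \<in> Mor" "tg i = sr p"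
proof -
  have "is_kernel C i p" using conflation_kernel_cokernel_pair[OF assms(1)]
    by (auto simp: kernel_cokernel_pair_def)
  then show "i \<in> Mor" "p \<in> Mor" "tg i = sr p"
    unfolding is_kernel_def in_hom_iff by auto
qed

lemma conflationD':
  assumes "(i, p) \<in> Conf"
  shows "kernel i p (sr i) (tg i) (tg p)" "cokernel p i (sr i) (tg i) (tg p)"
  using conflationD[OF assms] conflation_typing[OF assms] by (auto simp: in_hom_iff)

lemma conflation_deflation: "(i, p) \<in> Conf \<Longrightarrow> deflation C p" unfolding deflation_def by blast

lemma conflation_inflation: "(i, p) \<in> Conf \<Longrightarrow> inflation C i" unfolding inflation_def by blast

lemma deflation_mor: "deflation C p \<Longrightarrow> p \<in> Mor"
  unfolding deflation_def using conflation_typing by blast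

lemma deflation_comp: "deflation C p \<Longrightarrow> deflation C q \<Longrightarrow> tg p = sr q \<Longrightarrow> deflation C (q \<cdot> p)"
  using deflation_exact unfolding deflation_exact_def by blast

lemma A_extension_closed: "(i, p) \<in> Conf \<Longrightarrow> tg i \<in> A \<longleftrightarrow> (sr i \<in> A \<and> tg p \<in> A)"
  using percolating unfolding admissibly_deflation_percolating_def by blast

lemma A_factorization: "f \<in> Mor \<Longrightarrow> tg f \<in> A \<Longrightarrow> (\<exists>e m. deflation C e \<and> inflation C m
        \<and> sr e = sr f \<and> tg e = sr m \<and> tg m = tg f \<and> sr m \<in> A \<and> m \<cdot> e = f)"
  using percolating unfolding admissibly_deflation_percolating_def by blast

lemma A_nonempty: "\<exists>a. a \<in> A" "A \<subseteq> Ob"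
  using percolating unfolding admissibly_deflation_percolating_def by blast+

lemma isoI:
  assumes "a \<in> Hom X Y" "b \<in> Hom Y X" "b \<cdot> a = idn X" "a \<cdot> b = idn Y"
  shows "iso C a"
  unfolding iso_def using assms by (auto simp: in_hom_iff intro!: bexI[of _ b])

lemma conflations_iso_closed: "\<forall>i p i' p' a b c. (i,p) \<in> conflations C \<longrightarrow>
        i' \<in> hom C (src C i') (tgt C i') \<longrightarrow> p' \<in> hom C (tgt C i') (tgt C p') \<longrightarrow>
        iso C a \<longrightarrow> iso C b \<longrightarrow> iso C c \<longrightarrow>
        a \<in> hom C (src C i) (src C i') \<longrightarrow> b \<in> hom C (tgt C i) (tgt C i') \<longrightarrow>
        c \<in> hom C (tgt C p) (tgt C p') \<longrightarrow>
        cmp C b i = cmp C i' a \<longrightarrow> cmp C c p = cmp C p' b \<longrightarrow>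
        (i',p') \<in> conflations C"
  using is_conflation_category[unfolded conflation_category_def] by (elim conjE)

lemma conflation_iso:
  assumes "(i, p) \<in> Conf" "i \<in> Hom K Y" "p \<in> Hom Y Z"
    "i' \<in> Hom K' Y'" "p' \<in> Hom Y' Z'"
    "a \<in> Hom K K'" "iso C a" "b \<in> Hom Y Y'" "iso C b" "c \<in> Hom Z Z'" "iso C c"
    "b \<cdot> i = i' \<cdot> a" "c \<cdot> p = p' \<cdot> b"
  shows "(i', p') \<in> Conf"
proof (rule conflations_iso_closed[rule_format, of i p i' p' a b c])
  show "(i, p) \<in> Conf" "iso C a" "iso C b" "iso C c" "b \<cdot> i = i' \<cdot> a" "c \<cdot> p = p' \<cdot> b"
    using assms by auto
  show "i' \<in> Hom (sr i') (tg i')" "p' \<in> Hom (tg i') (tg p')" "a \<in> Hom (sr i) (sr i')"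
    "b \<in> Hom (tg i) (tg i')" "c \<in> Hom (tg p) (tg p')"
    using assms(2-6,8,10) unfolding in_hom_iff by auto
qed

lemma conflation_iso_conj:
  assumes "(i, p) \<in> Conf" "i \<in> Hom K Y" "p \<in> Hom Y Z"
    "a \<in> Hom K' K" "a' \<in> Hom K K'" "a \<cdot> a' = idn K" "a' \<cdot> a = idn K'"
    "b \<in> Hom Y Y'" "b' \<in> Hom Y' Y" "b \<cdot> b' = idn Y'" "b' \<cdot> b = idn Y"
    "c \<in> Hom Z Z'" "c' \<in> Hom Z' Z" "c \<cdot> c' = idn Z'" "c' \<cdot> c = idn Z"
  shows "(b \<cdot> i \<cdot> a, c \<cdot> p \<cdot> b') \<in> Conf"
proof (rule conflation_iso[OF assms(1-3), of _ K' Y' _ Z' a'])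
  show "b \<cdot> i \<cdot> a \<in> Hom K' Y'" "c \<cdot> p \<cdot> b' \<in> Hom Y' Z'"
    "a' \<in> Hom K K'" "b \<in> Hom Y Y'" "c \<in> Hom Z Z'"
    using assms by (auto simp: in_hom_iff)
  show "iso C a'" using isoI[OF assms(5,4,6,7)] .
  show "iso C b" using isoI[OF assms(8,9,11,10)] .
  show "iso C c" using isoI[OF assms(12,13,15,14)] .
  have "b \<cdot> i \<cdot> a \<cdot> a' = b \<cdot> i \<cdot> (a \<cdot> a')" using assms by (auto simp: in_hom_iff)
  then show "b \<cdot> i = (b \<cdot> i \<cdot> a) \<cdot> a'" using assms by (auto simp: in_hom_iff)
  have "c \<cdot> p \<cdot> b' \<cdot> b = c \<cdot> p \<cdot> (b' \<cdot> b)" using assms by (auto simp: in_hom_iff)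
  then show "c \<cdot> p = (c \<cdot> p \<cdot> b') \<cdot> b" using assms by (auto simp: in_hom_iff)
qed

lemma conflation_iso_middle:
  assumes "(i, p) \<in> Conf" "i \<in> Hom K Y" "p \<in> Hom Y Z"
    "b \<in> Hom Y Y'" "b' \<in> Hom Y' Y" "b \<cdot> b' = idn Y'" "b' \<cdot> b = idn Y"
  shows "(b \<cdot> i, p \<cdot> b') \<in> Conf"
proof -
  have K: "K \<in> Ob" "Z \<in> Ob" using assms by (auto simp: in_hom_iff)
  have "(b \<cdot> i \<cdot> idn K, idn Z \<cdot> p \<cdot> b') \<in> Conf"
    using conflation_iso_conj[OF assms(1-3), of "idn K" K "idn K" b Y' b' "idn Z" Z "idn Z"] assms K
    by (simp add: in_hom_iff)
  then show ?thesis using assms by (simp add: in_hom_iff)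
qed

lemma kernel_conflation:
  assumes "deflation C p" "p \<in> Hom Y Z" "kernel k p K Y Z"
  shows "(k, p) \<in> Conf"
proof -
  obtain k0 where k0: "(k0, p) \<in> Conf" using assms(1) unfolding deflation_def by blast
  have k0h: "k0 \<in> Hom (sr k0) Y" using conflation_typing[OF k0] assms(2) by (auto simp: in_hom_iff)
  obtain \<phi> \<psi> where \<phi>: "\<phi> \<in> Hom K (sr k0)" "\<psi> \<in> Hom (sr k0) K" "\<psi> \<cdot> \<phi> = idn K"
    "\<phi> \<cdot> \<psi> = idn (sr k0)" "k0 \<cdot> \<phi> = k"
    using kernel_unique_iso[OF assms(3) conflationD(1)[OF k0 k0h assms(2)]] by blast
  have O: "Y \<in> Ob" "Z \<in> Ob" using assms(2) by (auto simp: in_hom_iff)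
  have "(idn Y \<cdot> k0 \<cdot> \<phi>, idn Z \<cdot> p \<cdot> idn Y) \<in> Conf"
    using conflation_iso_conj[OF k0 k0h assms(2) \<phi>(1,2,4,3), of "idn Y" Y "idn Y" "idn Z" Z "idn Z"]
      O
    by (simp add: in_hom_iff)
  moreover have "k \<in> Hom K Y" using assms(3) unfolding kernel_def by blast
  ultimately show ?thesis using \<phi> assms(2) by (simp add: in_hom_iff)
qed

lemma cokernel_conflation:
  assumes "inflation C k" "k \<in> Hom K Y" "cokernel p k K Y Z"
  shows "(k, p) \<in> Conf"
proof -
  obtain p0 where p0: "(k, p0) \<in> Conf" using assms(1) unfolding inflation_def by blast
  have p0h: "p0 \<in> Hom Y (tg p0)" using conflation_typing[OF p0] assms(2) by (auto simp: in_hom_iff)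
  obtain \<phi> \<psi> where \<phi>: "\<phi> \<in> Hom (tg p0) Z" "\<psi> \<in> Hom Z (tg p0)" "\<psi> \<cdot> \<phi> = idn (tg p0)"
    "\<phi> \<cdot> \<psi> = idn Z" "\<phi> \<cdot> p0 = p"
    using cokernel_unique_iso[OF assms(3) conflationD(2)[OF p0 assms(2) p0h]] by blast
  have O: "K \<in> Ob" "Y \<in> Ob" using assms(2) by (auto simp: in_hom_iff)
  have "(idn Y \<cdot> k \<cdot> idn K, \<phi> \<cdot> p0 \<cdot> idn Y) \<in> Conf"
    using conflation_iso_conj[OF p0 assms(2) p0h, of "idn K" K "idn K" "idn Y" Y "idn Y" \<phi> Z \<psi>] \<phi> O
    by (simp add: in_hom_iff)
  then show ?thesis using \<phi> assms(2) p0h by (simp add: in_hom_iff)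
qed

section \<open>Pullbacks and pushouts\<close>

definition pullback ::
    "'m \<Rightarrow> 'm \<Rightarrow> 'm \<Rightarrow> 'm \<Rightarrow> 'o \<Rightarrow> 'o \<Rightarrow> 'o \<Rightarrow> 'o \<Rightarrow> bool" where
  "pullback p f p' f' B D E P \<longleftrightarrow> p \<in> Hom B D \<and> f \<in> Hom E D \<and> p' \<in> Hom P E \<and> f' \<in> Hom P B
   \<and> p \<cdot> f' = f \<cdot> p'
   \<and> (\<forall>W u v. W \<in> Ob \<longrightarrow> u \<in> Hom W B \<longrightarrow> v \<in> Hom W E \<longrightarrow> p \<cdot> u = f \<cdot> v \<longrightarrow>
        (\<exists>!w. w \<in> Hom W P \<and> f' \<cdot> w = u \<and> p' \<cdot> w = v))"

definition pushout ::
    "'m \<Rightarrow> 'm \<Rightarrow> 'm \<Rightarrow> 'm \<Rightarrow> 'o \<Rightarrow> 'o \<Rightarrow> 'o \<Rightarrow> 'o \<Rightarrow> bool" where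
  "pushout a b a' b' B D E P \<longleftrightarrow> a \<in> Hom B D \<and> b \<in> Hom B E \<and> a' \<in> Hom E P \<and> b' \<in> Hom D P
   \<and> b' \<cdot> a = a' \<cdot> b
   \<and> (\<forall>W u v. W \<in> Ob \<longrightarrow> u \<in> Hom D W \<longrightarrow> v \<in> Hom E W \<longrightarrow> u \<cdot> a = v \<cdot> b \<longrightarrow>
        (\<exists>!w. w \<in> Hom P W \<and> w \<cdot> b' = u \<and> w \<cdot> a' = v))"

lemma pullbackD:
  assumes "pullback p f p' f' B D E P"
  shows "p \<in> Hom B D" "f \<in> Hom E D" "p' \<in> Hom P E" "f' \<in> Hom P B" "p \<cdot> f' = f \<cdot> p'"
  using assms unfolding pullback_def by blast+

lemma pushoutD:
  assumes "pushout a b a' b' B D E P"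
  shows "a \<in> Hom B D" "b \<in> Hom B E" "a' \<in> Hom E P" "b' \<in> Hom D P" "b' \<cdot> a = a' \<cdot> b"
  using assms unfolding pushout_def by blast+

lemma pullback_lift:
  assumes "pullback p f p' f' B D E P" "u \<in> Hom W B" "v \<in> Hom W E" "p \<cdot> u = f \<cdot> v"
  shows "\<exists>w. w \<in> Hom W P \<and> f' \<cdot> w = u \<and> p' \<cdot> w = v"
proof -
  have "W \<in> Ob" using assms(2) by (auto simp: in_hom_iff)
  then show ?thesis using assms unfolding pullback_def by blast
qed

lemma pullback_uniq:
  assumes pb: "pullback p f p' f' B D E P" and w: "w1 \<in> Hom W P" "w2 \<in> Hom W P"
    and eq: "f' \<cdot> w1 = f' \<cdot> w2" "p' \<cdot> w1 = p' \<cdot> w2"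
  shows "w1 = w2"
proof -
  note h = pullbackD[OF pb]
  have "W \<in> Ob" "f' \<cdot> w1 \<in> Hom W B" "p' \<cdot> w1 \<in> Hom W E" using h w by (auto simp: in_hom_iff)
  moreover have "p \<cdot> (f' \<cdot> w1) = f \<cdot> (p' \<cdot> w1)" using h w by (simp add: in_hom_iff flip: cmp_assoc)
  ultimately have "\<exists>!w. w \<in> Hom W P \<and> f' \<cdot> w = f' \<cdot> w1 \<and> p' \<cdot> w = p' \<cdot> w1"
    using pb unfolding pullback_def by blast
  then show ?thesis using w eq by auto
qed

lemma pushout_desc:
  assumes "pushout a b a' b' B D E P" "u \<in> Hom D W" "v \<in> Hom E W" "u \<cdot> a = v \<cdot> b"
  shows "\<exists>w. w \<in> Hom P W \<and> w \<cdot> b' = u \<and> w \<cdot> a' = v"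
proof -
  have "W \<in> Ob" using assms(2) by (auto simp: in_hom_iff)
  then show ?thesis using assms unfolding pushout_def by blast
qed

lemma pushout_uniq:
  assumes po: "pushout a b a' b' B D E P" and w: "w1 \<in> Hom P W" "w2 \<in> Hom P W"
    and eq: "w1 \<cdot> b' = w2 \<cdot> b'" "w1 \<cdot> a' = w2 \<cdot> a'"
  shows "w1 = w2"
proof -
  note h = pushoutD[OF po]
  have "W \<in> Ob" "w1 \<cdot> b' \<in> Hom D W" "w1 \<cdot> a' \<in> Hom E W" using h w by (auto simp: in_hom_iff)
  moreover have "(w1 \<cdot> b') \<cdot> a = (w1 \<cdot> a') \<cdot> b" using h w by (simp add: in_hom_iff)
  ultimately have "\<exists>!w. w \<in> Hom P W \<and> w \<cdot> b' = w1 \<cdot> b' \<and> w \<cdot> a' = w1 \<cdot> a'"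
    using po unfolding pushout_def by blast
  then show ?thesis using w eq by auto
qed

lemma pullback_swap:
  assumes "pullback p f p' f' B D E P"
  shows "pullback f p f' p' E D B P"
  using assms unfolding pullback_def by metis

lemma pullback_unique_iso:
  assumes pb: "pullback p f p' f' B D E P" and pb0: "pullback p f p0 f0 B D E P0"
  obtains \<phi> \<psi> where "\<phi> \<in> Hom P P0" "\<psi> \<in> Hom P0 P" "\<psi> \<cdot> \<phi> = idn P" "\<phi> \<cdot> \<psi> = idn P0" "p0 \<cdot> \<phi> = p'"
proof -
  note h = pullbackD[OF pb] and h0 = pullbackD[OF pb0]
  have O: "P \<in> Ob" "P0 \<in> Ob" using h(3) h0(3) by (auto simp: in_hom_iff)
  obtain \<phi> where \<phi>: "\<phi> \<in> Hom P P0" "f0 \<cdot> \<phi> = f'" "p0 \<cdot> \<phi> = p'"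
    using pullback_lift[OF pb0 h(4,3,5)] by blast
  obtain \<psi> where \<psi>: "\<psi> \<in> Hom P0 P" "f' \<cdot> \<psi> = f0" "p' \<cdot> \<psi> = p0"
    using pullback_lift[OF pb h0(4,3,5)] by blast
  have "\<psi> \<cdot> \<phi> = idn P"
    by (rule pullback_uniq[OF pb]) (use \<phi> \<psi> h O in \<open>simp_all add: in_hom_iff flip: cmp_assoc\<close>)
  moreover have "\<phi> \<cdot> \<psi> = idn P0"
    by (rule pullback_uniq[OF pb0]) (use \<phi> \<psi> h0 O in \<open>simp_all add: in_hom_iff flip: cmp_assoc\<close>)
  ultimately show thesis using that \<phi> \<psi> by blast
qed

lemma pushout_unique_iso:
  assumes po: "pushout a b a' b' B D E P" and po0: "pushout a b a0 b0 B D E P0"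
  obtains \<phi> \<psi> where "\<phi> \<in> Hom P P0" "\<psi> \<in> Hom P0 P" "\<psi> \<cdot> \<phi> = idn P" "\<phi> \<cdot> \<psi> = idn P0" "\<phi> \<cdot> a' = a0"
proof -
  note h = pushoutD[OF po] and h0 = pushoutD[OF po0]
  have O: "P \<in> Ob" "P0 \<in> Ob" using h(3) h0(3) by (auto simp: in_hom_iff)
  obtain \<phi> where \<phi>: "\<phi> \<in> Hom P P0" "\<phi> \<cdot> b' = b0" "\<phi> \<cdot> a' = a0"
    using pushout_desc[OF po h0(4,3,5)] by blast
  obtain \<psi> where \<psi>: "\<psi> \<in> Hom P0 P" "\<psi> \<cdot> b0 = b'" "\<psi> \<cdot> a0 = a'"
    using pushout_desc[OF po0 h(4,3,5)] by blast
  have "\<psi> \<cdot> \<phi> = idn P"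
    by (rule pushout_uniq[OF po]) (use \<phi> \<psi> h O in \<open>simp_all add: in_hom_iff\<close>)
  moreover have "\<phi> \<cdot> \<psi> = idn P0"
    by (rule pushout_uniq[OF po0]) (use \<phi> \<psi> h0 O in \<open>simp_all add: in_hom_iff\<close>)
  ultimately show thesis using that \<phi> \<psi> by blast
qed

lemma pullback_deflation_exists:
  assumes "deflation C p" "p \<in> Hom B D" "f \<in> Hom E D"
  shows "\<exists>P p' f'. pullback p f p' f' B D E P \<and> deflation C p'"
proof -
  have "f \<in> Mor" "tg f = tg p" using assms(2,3) by (auto simp: in_hom_iff)
  then obtain p' f' where "is_pullback C p f p' f'" "deflation C p'"
    using deflation_exact assms(1) unfolding deflation_exact_def by blast
  moreover from this(1) obtain B' D' E' P where "pullback p f p' f' B' D' E' P"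
    unfolding is_pullback_def pullback_def by blast
  moreover from this have "B' = B" "D' = D" "E' = E"
    using pullbackD assms(2,3) by (auto simp: in_hom_iff)
  ultimately show ?thesis by blast
qed

lemma pushout_A_deflation_exists:
  assumes "inflation C a" "deflation C b" "a \<in> Hom B D" "b \<in> Hom B E" "E \<in> A"
  shows "\<exists>P a' b'. pushout a b a' b' B D E P \<and> deflation C b' \<and> inflation C a'"
proof -
  have "sr a = sr b" "tg b \<in> A" using assms(3-5) by (auto simp: in_hom_iff)
  then obtain a' b' where "is_pushout C a b a' b'" "deflation C b'" "inflation C a'"
    using percolating assms(1,2) unfolding admissibly_deflation_percolating_def by blast
  moreover from this(1) obtain B' D' E' P where "pushout a b a' b' B' D' E' P"
    unfolding is_pushout_def pushout_def by blast
  moreover from this have "B' = B" "D' = D" "E' = E"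
    using pushoutD assms(3,4) by (auto simp: in_hom_iff)
  ultimately show ?thesis by blast
qed

lemma pullback_deflation:
  assumes "pullback p f p' f' B D E P" "deflation C p"
  shows "deflation C p'"
proof -
  have h: "p \<in> Hom B D" "f \<in> Hom E D" "p' \<in> Hom P E"
    using pullbackD[OF assms(1)] by auto
  obtain P0 p0 f0 where P0: "pullback p f p0 f0 B D E P0" "deflation C p0"
    using pullback_deflation_exists[OF assms(2) h(1,2)] by blast
  obtain \<phi> \<psi> where pp: "\<phi> \<in> Hom P P0" "\<psi> \<in> Hom P0 P" "\<psi> \<cdot> \<phi> = idn P" "\<phi> \<cdot> \<psi> = idn P0"
     "p0 \<cdot> \<phi> = p'" by (rule pullback_unique_iso[OF assms(1) P0(1)])
  obtain k0 where k0: "(k0, p0) \<in> Conf" using P0(2) unfolding deflation_def by blast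
  have p0h: "p0 \<in> Hom P0 E" using pullbackD[OF P0(1)] by auto
  have k0h: "k0 \<in> Hom (sr k0) P0" using conflation_typing[OF k0] p0h by (auto simp: in_hom_iff)
  have "(\<psi> \<cdot> k0, p0 \<cdot> \<phi>) \<in> Conf"
    using conflation_iso_middle[OF k0 k0h p0h pp(2,1,3,4)] .
  then show ?thesis unfolding deflation_def pp(5) by blast
qed

lemma pushout_inflation:
  assumes "pushout a b a' b' B D E P" "inflation C a'" "pushout a b a0 b0 B D E P0"
  shows "inflation C a0"
proof -
  obtain \<phi> \<psi> where \<phi>: "\<phi> \<in> Hom P P0" "\<psi> \<in> Hom P0 P" "\<psi> \<cdot> \<phi> = idn P" "\<phi> \<cdot> \<psi> = idn P0"
    "\<phi> \<cdot> a' = a0" by (rule pushout_unique_iso[OF assms(1,3)])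
  obtain c where c: "(a', c) \<in> Conf" using assms(2) unfolding inflation_def by blast
  have a': "a' \<in> Hom E P" using pushoutD[OF assms(1)] by blast
  have "c \<in> Hom P (tg c)" using conflation_typing[OF c] a' by (auto simp: in_hom_iff)
  then have "(\<phi> \<cdot> a', c \<cdot> \<psi>) \<in> Conf" using conflation_iso_middle[OF c a'] \<phi> by blast
  then show ?thesis unfolding \<phi>(5) inflation_def by blast
qed

lemma pullback_kernel_conflation:
  assumes kp: "(k, p) \<in> Conf" "k \<in> Hom K B" and pb: "pullback p f p' f' B D E P"
    and p': "deflation C p'"
  shows "\<exists>k'. k' \<in> Hom K P \<and> f' \<cdot> k' = k \<and> p' \<cdot> k' = zr K E \<and> (k', p') \<in> Conf"
proof -
  note h = pullbackD[OF pb]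
  have ker: "kernel k p K B D" using conflationD[OF kp h(1)] by blast
  have O: "K \<in> Ob" "E \<in> Ob" "D \<in> Ob" using kp(2) h by (auto simp: in_hom_iff)
  have "p \<cdot> k = f \<cdot> zr K E" "zr K E \<in> Hom K E"
    using ker h(2) O unfolding kernel_def by (auto simp: in_hom_iff)
  then obtain k' where k': "k' \<in> Hom K P" "f' \<cdot> k' = k" "p' \<cdot> k' = zr K E"
    using pullback_lift[OF pb kp(2)] by blast
  have "kernel k' p' K P E"
    unfolding kernel_def
  proof (intro conjI allI impI)
    show "k' \<in> Hom K P" "p' \<in> Hom P E" "p' \<cdot> k' = zr K E" using k' h by auto
    fix W t assume W: "W \<in> Ob" and t: "t \<in> Hom W P" and p't: "p' \<cdot> t = zr W E"
    have "p \<cdot> (f' \<cdot> t) = f \<cdot> (p' \<cdot> t)" using h t by (simp add: in_hom_iff flip: cmp_assoc)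
    then have "p \<cdot> (f' \<cdot> t) = zr W D" "f' \<cdot> t \<in> Hom W B" using p't h t W by (auto simp: in_hom_iff)
    then obtain u where u: "u \<in> Hom W K" "k \<cdot> u = f' \<cdot> t" using kernel_lift[OF ker] by blast
    have "k' \<cdot> u = t"
    proof (rule pullback_uniq[OF pb])
      show "k' \<cdot> u \<in> Hom W P" using k' u by (auto simp: in_hom_iff)
      show "f' \<cdot> (k' \<cdot> u) = f' \<cdot> t" using k' u h by (simp add: in_hom_iff flip: cmp_assoc)
      show "p' \<cdot> (k' \<cdot> u) = p' \<cdot> t" using k' u h p't O by (simp add: in_hom_iff flip: cmp_assoc)
    qed fact
    moreover have "v = u" if "v \<in> Hom W K" "k' \<cdot> v = t" for v
    proof (rule kernel_cancel[OF ker that(1) u(1)])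
      have "k \<cdot> v = f' \<cdot> (k' \<cdot> v)" using k' that(1) h by (simp add: in_hom_iff flip: cmp_assoc)
      then show "k \<cdot> v = k \<cdot> u" using that(2) u(2) by simp
    qed
    ultimately show "\<exists>!u. u \<in> Hom W K \<and> k' \<cdot> u = t" using u(1) by blast
  qed
  then show ?thesis using kernel_conflation[OF p' h(3)] k' by blast
qed

lemma pullback_kernel_comp:
  assumes pb: "pullback p f p' f' B D E P" and ker: "kernel f e E D V"
  shows "kernel f' (e \<cdot> p) P B V"
  unfolding kernel_def
proof (intro conjI allI impI)
  have h: "p \<in> Hom B D" "f \<in> Hom E D" "p' \<in> Hom P E" "f' \<in> Hom P B" "p \<cdot> f' = f \<cdot> p'"
    using pullbackD[OF pb] by auto
  have e: "e \<in> Hom D V" "e \<cdot> f = zr E V" using ker unfolding kernel_def by auto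
  show "f' \<in> Hom P B" "e \<cdot> p \<in> Hom B V" using h e by (auto simp: in_hom_iff)
  have V: "V \<in> Ob" using e by (auto simp: in_hom_iff)
  have "(e \<cdot> p) \<cdot> f' = (e \<cdot> f) \<cdot> p'" using h e(1) by (simp add: in_hom_iff)
  then show "(e \<cdot> p) \<cdot> f' = zr P V" using h e V by (simp add: in_hom_iff)
  fix W t assume W: "W \<in> Ob" and t: "t \<in> Hom W B" and et: "(e \<cdot> p) \<cdot> t = zr W V"
  have "p \<cdot> t \<in> Hom W D" "e \<cdot> (p \<cdot> t) = zr W V" using h e et t by (auto simp: in_hom_iff)
  then obtain v where v: "v \<in> Hom W E" "f \<cdot> v = p \<cdot> t" using kernel_lift[OF ker] by blast
  obtain w where w: "w \<in> Hom W P" "f' \<cdot> w = t" "p' \<cdot> w = v"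
    using pullback_lift[OF pb t v(1) v(2)[symmetric]] by blast
  show "\<exists>!w. w \<in> Hom W P \<and> f' \<cdot> w = t"
  proof (rule ex1I[of _ w])
    show "w \<in> Hom W P \<and> f' \<cdot> w = t" using w by simp
    fix w' assume w': "w' \<in> Hom W P \<and> f' \<cdot> w' = t"
    have sq: "f \<cdot> (p' \<cdot> x) = p \<cdot> (f' \<cdot> x)" if "x \<in> Hom W P" for x
      using h that by (simp add: in_hom_iff flip: cmp_assoc)
    have "f \<cdot> (p' \<cdot> w') = f \<cdot> (p' \<cdot> w)" using sq[of w] sq[of w'] w w' by simp
    then have "p' \<cdot> w' = p' \<cdot> w"
      using kernel_cancel[OF ker, of "p' \<cdot> w'" W "p' \<cdot> w"] w w' h by (auto simp: in_hom_iff)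
    then show "w' = w" using pullback_uniq[OF pb, of w' W w] w w' by auto
  qed
qed

lemma kernel_pullback_square:
  assumes l: "kernel l h L Q V" and m: "kernel m (h \<cdot> g) M Y V"
    and g: "g \<in> Hom Y Q" and r: "r \<in> Hom M L" "l \<cdot> r = g \<cdot> m"
  shows "pullback g l r m Y Q L M"
  unfolding pullback_def
proof (intro conjI allI impI)
  have lh: "l \<in> Hom L Q" "h \<in> Hom Q V" "h \<cdot> l = zr L V" using l unfolding kernel_def by auto
  have mh: "m \<in> Hom M Y" using m unfolding kernel_def by auto
  show "g \<in> Hom Y Q" "l \<in> Hom L Q" "r \<in> Hom M L" "m \<in> Hom M Y" "g \<cdot> m = l \<cdot> r"
    using g lh mh r by auto
  fix W u v assume W: "W \<in> Ob" and u: "u \<in> Hom W Y" and v: "v \<in> Hom W L" and e: "g \<cdot> u = l \<cdot> v"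
  have "(h \<cdot> g) \<cdot> u = (h \<cdot> l) \<cdot> v" using e g u v lh(1,2) by (simp add: in_hom_iff)
  moreover have "V \<in> Ob" using lh(2) by (auto simp: in_hom_iff)
  ultimately have "(h \<cdot> g) \<cdot> u = zr W V" using lh v W by (simp add: in_hom_iff)
  then obtain w where w: "w \<in> Hom W M" "m \<cdot> w = u" using kernel_lift[OF m u] by blast
  have "l \<cdot> (r \<cdot> w) = g \<cdot> (m \<cdot> w)" using r g w(1) lh(1) mh by (simp add: in_hom_iff flip: cmp_assoc)
  then have "r \<cdot> w = v"
    using kernel_cancel[OF l, of "r \<cdot> w" W v] w(2) e r(1) w(1) v by (simp add: in_hom_iff)
  show "\<exists>!w. w \<in> Hom W M \<and> m \<cdot> w = u \<and> r \<cdot> w = v"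
  proof (rule ex1I[of _ w])
    show "w \<in> Hom W M \<and> m \<cdot> w = u \<and> r \<cdot> w = v" using w \<open>r \<cdot> w = v\<close> by simp
    fix w' assume "w' \<in> Hom W M \<and> m \<cdot> w' = u \<and> r \<cdot> w' = v"
    then show "w' = w" using kernel_cancel[OF m, of w' W w] w by auto
  qed
qed

section \<open>Zero objects and biproducts\<close>

lemma to_zero_object_unique:
  assumes "zero_object C Z0" "t \<in> Hom X Z0"
  shows "t = zr X Z0"
proof -
  have X: "X \<in> Ob" "Z0 \<in> Ob" using assms(2) by (auto simp: in_hom_iff)
  have "zr X Z0 \<in> Hom X Z0" using X by (simp add: in_hom_iff)
  then show ?thesis using assms X unfolding zero_object_def hom_def by blast
qed

lemma from_zero_object_unique:
  assumes "zero_object C Z0" "t \<in> Hom Z0 X"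
  shows "t = zr Z0 X"
proof -
  have X: "X \<in> Ob" "Z0 \<in> Ob" using assms(2) by (auto simp: in_hom_iff)
  have "zr Z0 X \<in> Hom Z0 X" using X by (simp add: in_hom_iff)
  then show ?thesis using assms X unfolding zero_object_def hom_def by blast
qed

lemma zero_objectI:
  assumes K: "K \<in> Ob" and idK: "idn K = zr K K"
  shows "zero_object C K"
  unfolding zero_object_def
proof (intro conjI ballI)
  fix X assume X: "X \<in> Ob"
  show "\<exists>!f. f \<in> hom C X K"
  proof (rule ex1I[of _ "zr X K"])
    show "zr X K \<in> Hom X K" using X K by (simp add: in_hom_iff)
    fix t assume t: "t \<in> Hom X K"
    have "t = idn K \<cdot> t" using t by (simp add: in_hom_iff)
    also have "\<dots> = zr X K" unfolding idK using t K by (simp add: in_hom_iff)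
    finally show "t = zr X K" .
  qed
  show "\<exists>!f. f \<in> hom C K X"
  proof (rule ex1I[of _ "zr K X"])
    show "zr K X \<in> Hom K X" using X K by (simp add: in_hom_iff)
    fix t assume t: "t \<in> Hom K X"
    have "t = t \<cdot> idn K" using t by (simp add: in_hom_iff)
    also have "\<dots> = zr K X" unfolding idK using t K by (simp add: in_hom_iff)
    finally show "t = zr K X" .
  qed
qed (fact K)

lemma zero_object_exists: "\<exists>Z0. zero_object C Z0"
  using is_additive unfolding additive_def by blast

lemma zero_object_obj: "zero_object C Z0 \<Longrightarrow> Z0 \<in> Ob"
  unfolding zero_object_def by blast

lemma zero_object_in_A: "\<exists>K. zero_object C K \<and> K \<in> A"
proof -
  obtain Z0 where Z0: "zero_object C Z0" using zero_object_exists by blast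
  obtain a where a: "a \<in> A" "a \<in> Ob" using A_nonempty by blast
  have O: "Z0 \<in> Ob" using zero_object_obj[OF Z0] .
  obtain e m where em: "deflation C e" "sr e = Z0" "tg e = sr m" "sr m \<in> A"
    using A_factorization[of "zr Z0 a"] a O by auto
  obtain k where k: "(k, e) \<in> Conf" using em(1) unfolding deflation_def by blast
  have cok: "cokernel e k (sr k) Z0 (sr m)"
    using conflationD'(2)[OF k] conflation_typing[OF k] em(2,3) by simp
  have e: "e \<in> Hom Z0 (sr m)" using em(2,3) deflation_mor[OF em(1)] by (simp add: in_hom_iff)
  have K: "sr m \<in> Ob" using e tgt_in_obj unfolding in_hom_iff by metis
  have "e = zr Z0 (sr m)" using from_zero_object_unique[OF Z0 e] .
  then have "idn (sr m) \<cdot> e = zr (sr m) (sr m) \<cdot> e" using K O by simp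
  then have "idn (sr m) = zr (sr m) (sr m)"
    using cokernel_cancel[OF cok, of "idn (sr m)" "sr m" "zr (sr m) (sr m)"] K
    by (simp add: in_hom_iff)
  then show ?thesis using zero_objectI K em(4) by blast
qed

lemma deflation_to_zero_object:
  assumes "X \<in> Ob"
  shows "\<exists>Z0. zero_object C Z0 \<and> deflation C (zr X Z0)"
proof -
  obtain K where K: "zero_object C K" "K \<in> A" using zero_object_in_A by blast
  have KO: "K \<in> Ob" using zero_object_obj[OF K(1)] .
  obtain e m where em: "deflation C e" "inflation C m" "sr e = X" "tg e = sr m" "tg m = K"
    using A_factorization[of "zr X K"] K KO assms by auto
  obtain c where c: "(m, c) \<in> Conf" using em(2) unfolding inflation_def by blast
  have ker: "kernel m c (sr m) K (tg c)" using conflationD'(1)[OF c] em(5) by simp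
  have m: "m \<in> Hom (sr m) K" "sr m \<in> Ob"
    using conflation_typing[OF c] em(5) by (auto simp: in_hom_iff)
  have "m \<cdot> idn (sr m) = m \<cdot> zr (sr m) (sr m)"
    using to_zero_object_unique[OF K(1)] m by (simp add: in_hom_iff)
  then have "idn (sr m) = zr (sr m) (sr m)"
    using kernel_cancel[OF ker, of "idn (sr m)" "sr m" "zr (sr m) (sr m)"] m
    by (simp add: in_hom_iff)
  then have Z: "zero_object C (sr m)" using zero_objectI m(2) by blast
  have "e \<in> Hom X (sr m)" using em deflation_mor by (auto simp: in_hom_iff)
  then have "e = zr X (sr m)" using to_zero_object_unique[OF Z] by blast
  then show ?thesis using Z em(1) by metis
qed

lemma biproduct_exists:
  assumes "X1 \<in> Ob" "X2 \<in> Ob"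
  shows "\<exists>S p1 p2 i1 i2. biproduct C X1 X2 S p1 p2 i1 i2"
  using is_additive assms unfolding additive_def by blast

lemma biproductD:
  assumes "biproduct C X1 X2 S p1 p2 i1 i2"
  shows "S \<in> Ob" "p1 \<in> Hom S X1" "p2 \<in> Hom S X2" "i1 \<in> Hom X1 S" "i2 \<in> Hom X2 S"
    "p1 \<cdot> i1 = idn X1" "p2 \<cdot> i2 = idn X2" "p2 \<cdot> i1 = zr X1 X2" "p1 \<cdot> i2 = zr X2 X1"
    "i1 \<cdot> p1 \<oplus> i2 \<cdot> p2 = idn S"
  using assms unfolding biproduct_def by auto

lemma biproduct_simps:
  assumes "biproduct C X1 X2 S p1 p2 i1 i2"
  shows "x \<in> Mor \<Longrightarrow> tg x = X1 \<Longrightarrow> p1 \<cdot> (i1 \<cdot> x) = x"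
    "x \<in> Mor \<Longrightarrow> tg x = X2 \<Longrightarrow> p2 \<cdot> (i2 \<cdot> x) = x"
    "x \<in> Mor \<Longrightarrow> tg x = X1 \<Longrightarrow> p2 \<cdot> (i1 \<cdot> x) = zr (sr x) X2"
    "x \<in> Mor \<Longrightarrow> tg x = X2 \<Longrightarrow> p1 \<cdot> (i2 \<cdot> x) = zr (sr x) X1"
    "p1 \<cdot> i1 = idn X1" "p2 \<cdot> i2 = idn X2" "p2 \<cdot> i1 = zr X1 X2" "p1 \<cdot> i2 = zr X2 X1"
proof -
  note b = biproductD[OF assms]
  show "p1 \<cdot> i1 = idn X1" "p2 \<cdot> i2 = idn X2" "p2 \<cdot> i1 = zr X1 X2" "p1 \<cdot> i2 = zr X2 X1"
    using b by auto
  show "x \<in> Mor \<Longrightarrow> tg x = X1 \<Longrightarrow> p1 \<cdot> (i1 \<cdot> x) = x"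
    using cmp_assoc_eq[OF b(6), of x] b(2,4) by (simp add: in_hom_iff)
  show "x \<in> Mor \<Longrightarrow> tg x = X2 \<Longrightarrow> p2 \<cdot> (i2 \<cdot> x) = x"
    using cmp_assoc_eq[OF b(7), of x] b(3,5) by (simp add: in_hom_iff)
  show "x \<in> Mor \<Longrightarrow> tg x = X1 \<Longrightarrow> p2 \<cdot> (i1 \<cdot> x) = zr (sr x) X2"
    using cmp_assoc_eq[OF b(8), of x] b(2,3,4) by (auto simp: in_hom_iff)
  show "x \<in> Mor \<Longrightarrow> tg x = X2 \<Longrightarrow> p1 \<cdot> (i2 \<cdot> x) = zr (sr x) X1"
    using cmp_assoc_eq[OF b(9), of x] b(2,3,5) by (auto simp: in_hom_iff)
qed

lemma biproduct_decomp:
  assumes "biproduct C X1 X2 S p1 p2 i1 i2" "w \<in> Hom W S"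
  shows "w = i1 \<cdot> (p1 \<cdot> w) \<oplus> i2 \<cdot> (p2 \<cdot> w)"
proof -
  note b = biproductD[OF assms(1)]
  have "w = idn S \<cdot> w" using assms by (simp add: in_hom_iff)
  also have "\<dots> = (i1 \<cdot> p1 \<oplus> i2 \<cdot> p2) \<cdot> w" by (simp only: b(10))
  also have "\<dots> = i1 \<cdot> (p1 \<cdot> w) \<oplus> i2 \<cdot> (p2 \<cdot> w)" using b(1-5) assms(2) by (simp add: in_hom_iff)
  finally show ?thesis .
qed

lemma biproduct_decomp_out:
  assumes "biproduct C X1 X2 S p1 p2 i1 i2" "w \<in> Hom S W"
  shows "w = w \<cdot> (i1 \<cdot> p1) \<oplus> w \<cdot> (i2 \<cdot> p2)"
proof -
  note b = biproductD[OF assms(1)]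
  have "w = w \<cdot> idn S" using assms by (simp add: in_hom_iff)
  also have "\<dots> = w \<cdot> (i1 \<cdot> p1 \<oplus> i2 \<cdot> p2)" by (simp only: b(10))
  also have "\<dots> = w \<cdot> (i1 \<cdot> p1) \<oplus> w \<cdot> (i2 \<cdot> p2)" using b(1-5) assms(2) by (simp add: in_hom_iff)
  finally show ?thesis .
qed

lemma biproduct_eq_into:
  assumes "biproduct C X1 X2 S p1 p2 i1 i2" "w1 \<in> Hom W S" "w2 \<in> Hom W S"
    "p1 \<cdot> w1 = p1 \<cdot> w2" "p2 \<cdot> w1 = p2 \<cdot> w2"
  shows "w1 = w2"
  using biproduct_decomp[OF assms(1,2)] biproduct_decomp[OF assms(1,3)] assms(4,5) by simp

lemma biproduct_kernel:
  assumes "biproduct C X1 X2 S p1 p2 i1 i2"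
  shows "kernel i1 p2 X1 S X2"
  unfolding kernel_def
proof (intro conjI allI impI)
  note b = biproductD[OF assms]
  note bs = biproduct_simps[OF assms]
  show "i1 \<in> Hom X1 S" "p2 \<in> Hom S X2" "p2 \<cdot> i1 = zr X1 X2" using b by auto
  fix W t assume W: "W \<in> Ob" and t: "t \<in> Hom W S" and pt: "p2 \<cdot> t = zr W X2"
  have "t = i1 \<cdot> (p1 \<cdot> t) \<oplus> i2 \<cdot> (p2 \<cdot> t)" using biproduct_decomp[OF assms t] .
  also have "\<dots> = i1 \<cdot> (p1 \<cdot> t)" unfolding pt using b t W by (simp add: in_hom_iff)
  finally have e: "i1 \<cdot> (p1 \<cdot> t) = t" by simp
  have u: "p1 \<cdot> t \<in> Hom W X1" using b t by (auto simp: in_hom_iff)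
  show "\<exists>!u. u \<in> Hom W X1 \<and> i1 \<cdot> u = t"
  proof (rule ex1I[of _ "p1 \<cdot> t"])
    show "p1 \<cdot> t \<in> Hom W X1 \<and> i1 \<cdot> (p1 \<cdot> t) = t" using u e by simp
    fix v assume v: "v \<in> Hom W X1 \<and> i1 \<cdot> v = t"
    show "v = p1 \<cdot> t" using v bs(1)[of v] unfolding in_hom_iff by metis
  qed
qed

lemma biproduct_proj_deflation:
  assumes "biproduct C X1 X2 S p1 p2 i1 i2"
  shows "deflation C p2"
proof -
  note b = biproductD[OF assms]
  note bs = biproduct_simps[OF assms]
  have O: "X1 \<in> Ob" "X2 \<in> Ob" using b by (auto simp: in_hom_iff)
  obtain Z0 where Z0: "zero_object C Z0" "deflation C (zr X1 Z0)"
    using deflation_to_zero_object[OF O(1)] by blast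
  have ZO: "Z0 \<in> Ob" using zero_object_obj[OF Z0(1)] .
  have "pullback (zr X1 Z0) (zr X2 Z0) p2 p1 X1 Z0 X2 S"
    unfolding pullback_def
  proof (intro conjI allI impI)
    show "zr X1 Z0 \<in> Hom X1 Z0" "zr X2 Z0 \<in> Hom X2 Z0" "p2 \<in> Hom S X2" "p1 \<in> Hom S X1"
      using O ZO b by (auto simp: in_hom_iff)
    show "zr X1 Z0 \<cdot> p1 = zr X2 Z0 \<cdot> p2" using O ZO b by (simp add: in_hom_iff)
    fix W u v assume W: "W \<in> Ob" and u: "u \<in> Hom W X1" and v: "v \<in> Hom W X2"
    show "\<exists>!w. w \<in> Hom W S \<and> p1 \<cdot> w = u \<and> p2 \<cdot> w = v"
    proof (rule ex1I[of _ "i1 \<cdot> u \<oplus> i2 \<cdot> v"])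
      show "i1 \<cdot> u \<oplus> i2 \<cdot> v \<in> Hom W S \<and> p1 \<cdot> (i1 \<cdot> u \<oplus> i2 \<cdot> v) = u \<and> p2 \<cdot> (i1 \<cdot> u \<oplus> i2 \<cdot> v) = v"
        using u v b bs W by (simp add: in_hom_iff)
      fix w assume w: "w \<in> Hom W S \<and> p1 \<cdot> w = u \<and> p2 \<cdot> w = v"
      then show "w = i1 \<cdot> u \<oplus> i2 \<cdot> v" using biproduct_decomp[OF assms, of w W] by simp
    qed
  qed
  then show ?thesis using pullback_deflation Z0(2) by blast
qed

lemma split_conflation_biproduct:
  assumes ker: "kernel a \<pi> E P Z" and \<sigma>: "\<sigma> \<in> Hom Z P" "\<pi> \<cdot> \<sigma> = idn Z"
  shows "\<exists>\<rho>. biproduct C Z E P \<pi> \<rho> \<sigma> a"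
proof -
  have h: "a \<in> Hom E P" "\<pi> \<in> Hom P Z" "\<pi> \<cdot> a = zr E Z" using ker unfolding kernel_def by auto
  have O: "E \<in> Ob" "P \<in> Ob" "Z \<in> Ob" using h by (auto simp: in_hom_iff)
  define e where "e = idn P \<oplus> \<ominus>(\<sigma> \<cdot> \<pi>)"
  have eh: "e \<in> Hom P P" unfolding e_def using \<sigma> h O by (auto simp: in_hom_iff)
  have "\<pi> \<cdot> e = \<pi> \<oplus> \<ominus>(\<pi> \<cdot> (\<sigma> \<cdot> \<pi>))" unfolding e_def using \<sigma> h O by (simp add: in_hom_iff)
  also have "\<pi> \<cdot> (\<sigma> \<cdot> \<pi>) = \<pi>" using cmp_assoc_eq[OF \<sigma>(2)] \<sigma> h by (simp add: in_hom_iff)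
  finally have "\<pi> \<cdot> e = zr P Z" using h by (simp add: in_hom_iff)
  then obtain \<rho> where \<rho>: "\<rho> \<in> Hom P E" "a \<cdot> \<rho> = e" using kernel_lift[OF ker eh] by blast
  have "a \<cdot> (\<rho> \<cdot> a) = e \<cdot> a" using cmp_assoc_eq[OF \<rho>(2)] h \<rho> by (simp add: in_hom_iff)
  also have "\<dots> = a \<oplus> \<ominus>(\<sigma> \<cdot> (\<pi> \<cdot> a))" unfolding e_def using h \<sigma> O by (simp add: in_hom_iff)
  also have "\<dots> = a \<cdot> idn E" using h \<sigma> O by (simp add: in_hom_iff)
  finally have \<rho>a: "\<rho> \<cdot> a = idn E"
    using kernel_cancel[OF ker, of "\<rho> \<cdot> a" E "idn E"] \<rho> h O by (simp add: in_hom_iff)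
  have "a \<cdot> (\<rho> \<cdot> \<sigma>) = e \<cdot> \<sigma>" using cmp_assoc_eq[OF \<rho>(2)] h \<rho> \<sigma> by (simp add: in_hom_iff)
  also have "\<dots> = \<sigma> \<oplus> \<ominus>(\<sigma> \<cdot> (\<pi> \<cdot> \<sigma>))" unfolding e_def using h \<sigma> O by (simp add: in_hom_iff)
  also have "\<dots> = a \<cdot> zr Z E" using h \<sigma> O by (simp add: in_hom_iff)
  finally have \<rho>\<sigma>: "\<rho> \<cdot> \<sigma> = zr Z E"
    using kernel_cancel[OF ker, of "\<rho> \<cdot> \<sigma>" Z "zr Z E"] \<rho> \<sigma> O by (simp add: in_hom_iff)
  have "\<sigma> \<cdot> \<pi> \<oplus> a \<cdot> \<rho> = idn P" unfolding \<rho>(2) e_def using \<sigma> h O by (simp add: in_hom_iff)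
  then show ?thesis unfolding biproduct_def using O \<sigma> \<rho> h \<rho>a \<rho>\<sigma> by auto
qed

section \<open>Composition with \<open>A\<^sup>-\<^sup>1\<close>-inflations and \<open>A\<^sup>-\<^sup>1\<close>-deflations\<close>

lemma pushout_cokernel:
  assumes po: "pushout a b a' d B D E P" and cok: "cokernel c a B D Q"
  obtains \<pi> where "\<pi> \<in> Hom P Q" "\<pi> \<cdot> d = c" "cokernel \<pi> a' E P Q"
proof -
  have h: "a \<in> Hom B D" "b \<in> Hom B E" "a' \<in> Hom E P" "d \<in> Hom D P" "d \<cdot> a = a' \<cdot> b"
    using pushoutD[OF po] by auto
  have c: "c \<in> Hom D Q" "c \<cdot> a = zr B Q" using cok unfolding cokernel_def by auto
  have O: "E \<in> Ob" "Q \<in> Ob" using h c by (auto simp: in_hom_iff)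
  have "c \<cdot> a = zr E Q \<cdot> b" "zr E Q \<in> Hom E Q" using c h(2) O by (simp_all add: in_hom_iff)
  then obtain \<pi> where \<pi>: "\<pi> \<in> Hom P Q" "\<pi> \<cdot> d = c" "\<pi> \<cdot> a' = zr E Q"
    using pushout_desc[OF po c(1)] by blast
  have "cokernel \<pi> a' E P Q"
    unfolding cokernel_def
  proof (intro conjI allI impI)
    show "a' \<in> Hom E P" "\<pi> \<in> Hom P Q" "\<pi> \<cdot> a' = zr E Q" using h \<pi> by auto
    fix W t assume W: "W \<in> Ob" and t: "t \<in> Hom P W" and ta: "t \<cdot> a' = zr E W"
    have "(t \<cdot> d) \<cdot> a = (t \<cdot> a') \<cdot> b" using h t by (simp add: in_hom_iff)
    then have "(t \<cdot> d) \<cdot> a = zr B W" "t \<cdot> d \<in> Hom D W" using ta h t W by (auto simp: in_hom_iff)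
    then obtain u where u: "u \<in> Hom Q W" "u \<cdot> c = t \<cdot> d" using cokernel_desc[OF cok] by blast
    have "u \<cdot> \<pi> = t"
    proof (rule pushout_uniq[OF po])
      show "u \<cdot> \<pi> \<in> Hom P W" using u \<pi> by (auto simp: in_hom_iff)
      show "(u \<cdot> \<pi>) \<cdot> d = t \<cdot> d" "(u \<cdot> \<pi>) \<cdot> a' = t \<cdot> a'"
        using u \<pi> h ta W O by (simp_all add: in_hom_iff)
    qed fact
    moreover have "v = u" if "v \<in> Hom Q W" "v \<cdot> \<pi> = t" for v
    proof (rule cokernel_cancel[OF cok that(1) u(1)])
      have "v \<cdot> c = (v \<cdot> \<pi>) \<cdot> d" using that(1) \<pi>(1) h by (simp add: in_hom_iff flip: \<pi>(2))
      then show "v \<cdot> c = u \<cdot> c" using that(2) u(2) by simp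
    qed
    ultimately show "\<exists>!u. u \<in> Hom Q W \<and> u \<cdot> \<pi> = t" using u(1) by blast
  qed
  then show thesis using that \<pi> by blast
qed

lemma pushout_kernel_comp:
  assumes po: "pushout a b a' d B D E P" and ka: "kernel a c B D Q" and ks: "kernel s b U B E"
    and \<pi>: "\<pi> \<in> Hom P Q" "\<pi> \<cdot> d = c" and ka': "kernel a' \<pi> E P Q"
  shows "kernel (a \<cdot> s) d U D P"
  unfolding kernel_def
proof (intro conjI allI impI)
  have h: "a \<in> Hom B D" "b \<in> Hom B E" "a' \<in> Hom E P" "d \<in> Hom D P" "d \<cdot> a = a' \<cdot> b"
    using pushoutD[OF po] by auto
  have s: "s \<in> Hom U B" "b \<cdot> s = zr U E" using ks unfolding kernel_def by auto
  have O: "E \<in> Ob" "P \<in> Ob" "Q \<in> Ob" "U \<in> Ob" using h \<pi> s by (auto simp: in_hom_iff)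
  show "a \<cdot> s \<in> Hom U D" "d \<in> Hom D P" using h s by (auto simp: in_hom_iff)
  have "d \<cdot> (a \<cdot> s) = a' \<cdot> (b \<cdot> s)" using h s(1) by (simp add: in_hom_iff flip: cmp_assoc)
  then show "d \<cdot> (a \<cdot> s) = zr U P" using s h O by (simp add: in_hom_iff)
  fix W t assume W: "W \<in> Ob" and t: "t \<in> Hom W D" and dt: "d \<cdot> t = zr W P"
  have "c \<cdot> t = zr W Q" using \<pi>(1) h t dt W by (simp add: in_hom_iff flip: \<pi>(2))
  then obtain u where u: "u \<in> Hom W B" "a \<cdot> u = t" using kernel_lift[OF ka t] by blast
  have "a' \<cdot> (b \<cdot> u) = d \<cdot> (a \<cdot> u)" using h u(1) by (simp add: in_hom_iff flip: cmp_assoc)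
  also have "\<dots> = a' \<cdot> zr W E" using u(2) dt h O W by (simp add: in_hom_iff)
  finally have "b \<cdot> u = zr W E"
    using kernel_cancel[OF ka', of "b \<cdot> u" W "zr W E"] h u(1) O W by (simp add: in_hom_iff)
  then obtain v where v: "v \<in> Hom W U" "s \<cdot> v = u" using kernel_lift[OF ks u(1)] by blast
  show "\<exists>!v. v \<in> Hom W U \<and> (a \<cdot> s) \<cdot> v = t"
  proof (rule ex1I[of _ v])
    show "v \<in> Hom W U \<and> (a \<cdot> s) \<cdot> v = t" using v u h s by (simp add: in_hom_iff)
    fix w assume "w \<in> Hom W U \<and> (a \<cdot> s) \<cdot> w = t"
    then have w: "w \<in> Hom W U" "(a \<cdot> s) \<cdot> w = t" by auto
    have "a \<cdot> (s \<cdot> w) = a \<cdot> (s \<cdot> v)" using w v u(2) h(1) s(1) by (simp add: in_hom_iff)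
    then have "s \<cdot> w = s \<cdot> v"
      using kernel_cancel[OF ka, of "s \<cdot> w" W "s \<cdot> v"] w(1) v(1) s(1) by (simp add: in_hom_iff)
    then show "w = v" using kernel_cancel[OF ks, of w W v] w v(1) by blast
  qed
qed

lemma pushout_conflations:
  assumes ac: "(a, c) \<in> Conf" "a \<in> Hom B D" "c \<in> Hom D Q"
    and sb: "(s, b) \<in> Conf" "s \<in> Hom U B" "b \<in> Hom B E" and E: "E \<in> A"
  obtains P a' d \<pi> where "pushout a b a' d B D E P" "\<pi> \<in> Hom P Q" "\<pi> \<cdot> d = c"
    "(a', \<pi>) \<in> Conf" "(a \<cdot> s, d) \<in> Conf"
proof -
  obtain P a' d where P: "pushout a b a' d B D E P" "deflation C d" "inflation C a'"
    using pushout_A_deflation_exists[OF conflation_inflation[OF ac(1)]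
        conflation_deflation[OF sb(1)] ac(2) sb(3) E] by blast
  have h: "a' \<in> Hom E P" "d \<in> Hom D P" using pushoutD[OF P(1)] by auto
  obtain \<pi> where \<pi>: "\<pi> \<in> Hom P Q" "\<pi> \<cdot> d = c" "cokernel \<pi> a' E P Q"
    using pushout_cokernel[OF P(1) conflationD(2)[OF ac]] by blast
  have a'\<pi>: "(a', \<pi>) \<in> Conf" using cokernel_conflation[OF P(3) h(1) \<pi>(3)] .
  have "kernel (a \<cdot> s) d U D P"
    using pushout_kernel_comp[OF P(1) conflationD(1)[OF ac] conflationD(1)[OF sb] \<pi>(1,2)
        conflationD(1)[OF a'\<pi> h(1) \<pi>(1)]] .
  then have "(a \<cdot> s, d) \<in> Conf" using kernel_conflation[OF P(2) h(2)] by blast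
  then show thesis using that P(1) \<pi>(1,2) a'\<pi> by blast
qed

lemma A_inflation_comp:
  assumes s: "A_inflation C A s" and a: "inflation C a" and sa: "tg s = sr a"
  shows "inflation C (a \<cdot> s)" and "A_inflation C A a \<Longrightarrow> A_inflation C A (a \<cdot> s)"
proof -
  obtain b where b: "(s, b) \<in> Conf" "tg b \<in> A" using s unfolding A_inflation_def by blast
  have comp: "\<exists>d. (a \<cdot> s, d) \<in> Conf \<and> (tg c \<in> A \<longrightarrow> tg d \<in> A)" if c: "(a, c) \<in> Conf" for c
  proof -
    have h: "a \<in> Hom (sr a) (tg a)" "c \<in> Hom (tg a) (tg c)"
      "s \<in> Hom (sr s) (sr a)" "b \<in> Hom (sr a) (tg b)"
      using conflation_typing[OF c] conflation_typing[OF b(1)] sa by (auto simp: in_hom_iff)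
    obtain P a' d \<pi> where P: "pushout a b a' d (sr a) (tg a) (tg b) P" "\<pi> \<in> Hom P (tg c)"
      "\<pi> \<cdot> d = c" "(a', \<pi>) \<in> Conf" "(a \<cdot> s, d) \<in> Conf"
      by (rule pushout_conflations[OF c h(1,2) b(1) h(3,4) b(2)])
    have "a' \<in> Hom (tg b) P" "d \<in> Hom (tg a) P" using pushoutD[OF P(1)] by auto
    then have "tg c \<in> A \<longrightarrow> tg d \<in> A"
      using A_extension_closed[OF P(4)] P(2) b(2) by (auto simp: in_hom_iff)
    then show ?thesis using P(5) by blast
  qed
  show "inflation C (a \<cdot> s)" using comp a unfolding inflation_def by blast
  show "A_inflation C A (a \<cdot> s)" if "A_inflation C A a"
    using comp that unfolding A_inflation_def by blast
qed

lemma pullback_A_deflation: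
  assumes pb: "pullback p f p' f' B D E P" and p: "A_deflation C A p"
  shows "A_deflation C A p'"
proof -
  obtain l where l: "(l, p) \<in> Conf" "sr l \<in> A" using p unfolding A_deflation_def by blast
  have "p \<in> Hom B D" using pullbackD[OF pb] by blast
  then have lh: "l \<in> Hom (sr l) B" using conflation_typing[OF l(1)] by (auto simp: in_hom_iff)
  have "deflation C p'" using pullback_deflation[OF pb conflation_deflation[OF l(1)]] .
  then obtain l' where "l' \<in> Hom (sr l) P" "(l', p') \<in> Conf"
    using pullback_kernel_conflation[OF l(1) lh pb] by blast
  then show ?thesis using l(2) unfolding A_deflation_def by (auto simp: in_hom_iff)
qed

lemma A_deflation_comp:
  assumes g: "A_deflation C A g" and h: "A_deflation C A h" and gh: "tg g = sr h"
  shows "A_deflation C A (h \<cdot> g)"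
proof -
  obtain k where k: "(k, g) \<in> Conf" "sr k \<in> A" using g unfolding A_deflation_def by blast
  obtain l where l: "(l, h) \<in> Conf" "sr l \<in> A" using h unfolding A_deflation_def by blast
  have gd: "deflation C g" and hd: "deflation C h"
    using k(1) l(1) conflation_deflation by blast+
  then obtain m where m: "(m, h \<cdot> g) \<in> Conf"
    using deflation_comp gh unfolding deflation_def by blast
  have mor: "g \<in> Mor" "h \<in> Mor" using gd hd deflation_mor by blast+
  have kl: "kernel l h (sr l) (sr h) (tg h)"
    using conflationD'[OF l(1)] conflation_typing[OF l(1)] by simp
  have km: "kernel m (h \<cdot> g) (sr m) (sr g) (tg h)"
    using conflationD'[OF m] conflation_typing[OF m] mor gh by simp
  have mh: "m \<in> Hom (sr m) (sr g)" "(h \<cdot> g) \<cdot> m = zr (sr m) (tg h)"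
    using km unfolding kernel_def by auto
  have "h \<cdot> (g \<cdot> m) = zr (sr m) (tg h)" "g \<cdot> m \<in> Hom (sr m) (sr h)"
    using mh mor gh by (auto simp: in_hom_iff)
  then obtain r where r: "r \<in> Hom (sr m) (sr l)" "l \<cdot> r = g \<cdot> m" using kernel_lift[OF kl] by blast
  have gh': "g \<in> Hom (sr g) (sr h)" using mor gh by (simp add: in_hom_iff)
  note pb = kernel_pullback_square[OF kl km gh' r]
  have kh: "k \<in> Hom (sr k) (sr g)" using conflation_typing[OF k(1)] by (simp add: in_hom_iff)
  obtain s where s: "s \<in> Hom (sr k) (sr m)" "(s, r) \<in> Conf"
    using pullback_kernel_conflation[OF k(1) kh pb pullback_deflation[OF pb gd]] by blast
  then have "sr m \<in> A" using A_extension_closed[OF s(2)] k(2) l(2) r(1) by (auto simp: in_hom_iff)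
  then show ?thesis using m unfolding A_deflation_def by blast
qed

section \<open>Comparison morphisms that are the identity on the cokernel\<close>

lemma conflation_morphism_mono:
  assumes ip: "(i, p) \<in> Conf" "i \<in> Hom X Y" "p \<in> Hom Y Z"
    and kr: "(k, r) \<in> Conf" "k \<in> Hom X R" "r \<in> Hom R Z"
    and \<phi>: "\<phi> \<in> Hom Y R" "\<phi> \<cdot> i = k" "r \<cdot> \<phi> = p"
    and t: "t \<in> Hom V Y" "\<phi> \<cdot> t = zr V R"
  shows "t = zr V Y"
proof -
  have O: "V \<in> Ob" "X \<in> Ob" "Z \<in> Ob" using t ip by (auto simp: in_hom_iff)
  have "p \<cdot> t = r \<cdot> (\<phi> \<cdot> t)" using \<phi> t(1) kr(3) by (simp add: in_hom_iff flip: cmp_assoc)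
  then have "p \<cdot> t = zr V Z" using t(2) kr(3) O by (simp add: in_hom_iff)
  then obtain u where u: "u \<in> Hom V X" "i \<cdot> u = t"
    using kernel_lift[OF conflationD(1)[OF ip] t(1)] by blast
  have "k \<cdot> u = \<phi> \<cdot> (i \<cdot> u)" using \<phi> ip(2) u(1) by (simp add: in_hom_iff flip: cmp_assoc)
  also have "\<dots> = k \<cdot> zr V X" using u(2) t(2) kr(2) O by (simp add: in_hom_iff)
  finally have "u = zr V X"
    using kernel_cancel[OF conflationD(1)[OF kr], of u V "zr V X"] u(1) O by (simp add: in_hom_iff)
  then show ?thesis using u(2) ip(2) O by (simp add: in_hom_iff)
qed

text \<open>The inverse of \<open>\<phi>\<close> is obtained by descending along the deflation \<open>W \<rightarrow> R\<close>, where \<open>W\<close> is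
  the pullback of \<open>p\<close> along \<open>r\<close>; it is a two-sided inverse because \<open>\<phi>\<close> is a monomorphism.\<close>


lemma short_five:
  assumes ip: "(i, p) \<in> Conf" "i \<in> Hom X Y" "p \<in> Hom Y Z"
    and kr: "(k, r) \<in> Conf" "k \<in> Hom X R" "r \<in> Hom R Z"
    and \<phi>: "\<phi> \<in> Hom Y R" "\<phi> \<cdot> i = k" "r \<cdot> \<phi> = p"
  obtains \<psi> where "\<psi> \<in> Hom R Y" "\<psi> \<cdot> \<phi> = idn Y" "\<phi> \<cdot> \<psi> = idn R"
proof -
  note mono = conflation_morphism_mono[OF ip kr \<phi>]
  have O: "Y \<in> Ob" "R \<in> Ob" using \<phi> by (auto simp: in_hom_iff)
  obtain W wR wY where W: "pullback p r wR wY Y Z R W" "deflation C wR"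
    using pullback_deflation_exists[OF conflation_deflation[OF ip(1)] ip(3) kr(3)] by blast
  have w: "wR \<in> Hom W R" "wY \<in> Hom W Y" "p \<cdot> wY = r \<cdot> wR" using pullbackD[OF W(1)] by auto
  obtain j where j: "j \<in> Hom X W" "wR \<cdot> j = zr X R" "(j, wR) \<in> Conf"
    using pullback_kernel_conflation[OF ip(1,2) W] by blast
  have "r \<cdot> (wR \<oplus> \<ominus>(\<phi> \<cdot> wY)) = r \<cdot> wR \<oplus> \<ominus>((r \<cdot> \<phi>) \<cdot> wY)"
    using w \<phi>(1) kr(3) by (simp add: in_hom_iff)
  then have "r \<cdot> (wR \<oplus> \<ominus>(\<phi> \<cdot> wY)) = zr W Z" using w \<phi> kr(3) by (simp add: in_hom_iff)
  moreover have "wR \<oplus> \<ominus>(\<phi> \<cdot> wY) \<in> Hom W R" using w \<phi>(1) by (auto simp: in_hom_iff)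
  ultimately obtain \<epsilon> where \<epsilon>: "\<epsilon> \<in> Hom W X" "k \<cdot> \<epsilon> = wR \<oplus> \<ominus>(\<phi> \<cdot> wY)"
    using kernel_lift[OF conflationD(1)[OF kr]] by blast
  define \<nu> where "\<nu> = wY \<oplus> i \<cdot> \<epsilon>"
  have \<nu>: "\<nu> \<in> Hom W Y" unfolding \<nu>_def using w \<epsilon> ip(2) by (auto simp: in_hom_iff)
  have "\<phi> \<cdot> \<nu> = \<phi> \<cdot> wY \<oplus> (\<phi> \<cdot> i) \<cdot> \<epsilon>" unfolding \<nu>_def
    using w \<epsilon>(1) ip(2) \<phi>(1) by (simp add: in_hom_iff)
  then have \<phi>\<nu>: "\<phi> \<cdot> \<nu> = wR" using \<epsilon> \<phi> w by (simp add: in_hom_iff)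
  have "\<phi> \<cdot> (\<nu> \<cdot> j) = zr X R" using \<phi>\<nu> j \<nu> \<phi>(1) by (simp add: in_hom_iff flip: cmp_assoc)
  then have "\<nu> \<cdot> j = zr X Y" using mono[of "\<nu> \<cdot> j" X] \<nu> j(1) by (simp add: in_hom_iff)
  then obtain \<psi> where \<psi>: "\<psi> \<in> Hom R Y" "\<psi> \<cdot> wR = \<nu>"
    using cokernel_desc[OF conflationD(2)[OF j(3,1) w(1)] \<nu>] by blast
  have "(\<phi> \<cdot> \<psi>) \<cdot> wR = idn R \<cdot> wR" using \<psi> \<phi>\<nu> \<phi>(1) w(1) by (simp add: in_hom_iff)
  then have \<phi>\<psi>: "\<phi> \<cdot> \<psi> = idn R"
    using cokernel_cancel[OF conflationD(2)[OF j(3,1) w(1)], of "\<phi> \<cdot> \<psi>" R "idn R"] \<phi>(1) \<psi>(1) O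
    by (simp add: in_hom_iff)
  have "\<phi> \<cdot> (\<psi> \<cdot> \<phi> \<oplus> \<ominus>(idn Y)) = (\<phi> \<cdot> \<psi>) \<cdot> \<phi> \<oplus> \<ominus>\<phi>" using \<phi>(1) \<psi>(1) O by (simp add: in_hom_iff)
  then have "\<phi> \<cdot> (\<psi> \<cdot> \<phi> \<oplus> \<ominus>(idn Y)) = zr Y R" using \<phi>\<psi> \<phi>(1) by (simp add: in_hom_iff)
  then have "\<psi> \<cdot> \<phi> \<oplus> \<ominus>(idn Y) = zr Y Y"
    using mono[of "\<psi> \<cdot> \<phi> \<oplus> \<ominus>(idn Y)" Y] \<phi>(1) \<psi>(1) O by (simp add: in_hom_iff)
  then have "\<psi> \<cdot> \<phi> = idn Y"
    using eq_of_diff_zero[of "\<psi> \<cdot> \<phi>" Y Y "idn Y"] \<phi>(1) \<psi>(1) O by (auto simp: in_hom_iff)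
  then show thesis using that \<psi>(1) \<phi>\<psi> by blast
qed

lemma kernel_comparison_conflation:
  assumes ip: "(i, p) \<in> Conf" "i \<in> Hom X Y" "p \<in> Hom Y Z"
    and kd: "(k, d) \<in> Conf" "k \<in> Hom X Q" "d \<in> Hom Q P"
    and \<sigma>: "kernel \<sigma> \<rho> Z P V" "deflation C \<rho>"
    and g: "g \<in> Hom Y Q" "g \<cdot> i = k" "d \<cdot> g = \<sigma> \<cdot> p"
  shows "(g, \<rho> \<cdot> d) \<in> Conf"
proof -
  have \<sigma>h: "\<sigma> \<in> Hom Z P" "\<rho> \<in> Hom P V" using \<sigma>(1) unfolding kernel_def by auto
  obtain R r s where R: "pullback d \<sigma> r s Q P Z R" "deflation C r"
    using pullback_deflation_exists[OF conflation_deflation[OF kd(1)] kd(3) \<sigma>h(1)] by blast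
  have rs: "r \<in> Hom R Z" "s \<in> Hom R Q" using pullbackD[OF R(1)] by auto
  have "deflation C (\<rho> \<cdot> d)"
    using deflation_comp[OF conflation_deflation[OF kd(1)] \<sigma>(2)] kd(3) \<sigma>h by (simp add: in_hom_iff)
  moreover have \<rho>d: "\<rho> \<cdot> d \<in> Hom Q V" using kd(3) \<sigma>h by (auto simp: in_hom_iff)
  ultimately have s\<rho>d: "(s, \<rho> \<cdot> d) \<in> Conf"
    using kernel_conflation pullback_kernel_comp[OF R(1) \<sigma>(1)] by blast
  obtain k' where k': "k' \<in> Hom X R" "s \<cdot> k' = k" "r \<cdot> k' = zr X Z" "(k', r) \<in> Conf"
    using pullback_kernel_conflation[OF kd(1,2) R] by blast
  obtain \<phi> where \<phi>: "\<phi> \<in> Hom Y R" "s \<cdot> \<phi> = g" "r \<cdot> \<phi> = p"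
    using pullback_lift[OF R(1) g(1) ip(3) g(3)] by blast
  have pi_zero: "p \<cdot> i = zr X Z" using conflationD[OF ip] unfolding kernel_def by blast
  have \<phi>i: "\<phi> \<cdot> i = k'"
  proof (rule pullback_uniq[OF R(1)])
    show "\<phi> \<cdot> i \<in> Hom X R" using \<phi>(1) ip(2) by (auto simp: in_hom_iff)
    show "s \<cdot> (\<phi> \<cdot> i) = s \<cdot> k'" "r \<cdot> (\<phi> \<cdot> i) = r \<cdot> k'"
      using \<phi> ip(2) rs g(2) k' pi_zero by (simp_all add: in_hom_iff flip: cmp_assoc)
  qed fact
  obtain \<psi> where \<psi>: "\<psi> \<in> Hom R Y" "\<psi> \<cdot> \<phi> = idn Y" "\<phi> \<cdot> \<psi> = idn R"
    by (rule short_five[OF ip k'(4) k'(1) rs(1) \<phi>(1) \<phi>i \<phi>(3)])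
  have O: "Q \<in> Ob" "V \<in> Ob" using kd(3) \<sigma>h by (auto simp: in_hom_iff)
  have "(idn Q \<cdot> s \<cdot> \<phi>, idn V \<cdot> (\<rho> \<cdot> d) \<cdot> idn Q) \<in> Conf"
    using conflation_iso_conj[OF s\<rho>d rs(2) \<rho>d \<phi>(1) \<psi>(1,3,2), of "idn Q" Q "idn Q" "idn V" V "idn V"]
      O kd(3) \<sigma>h by (simp add: in_hom_iff)
  then show ?thesis using \<phi> rs(2) kd(3) \<sigma>h g(1) by (simp add: in_hom_iff)
qed

lemma comparison_A_inflation:
  assumes ip: "(i, p) \<in> Conf" "i \<in> Hom X Y" "p \<in> Hom Y Z"
    and iq: "(i', q) \<in> Conf" "i' \<in> Hom X' Q" "q \<in> Hom Q Z"
    and f: "f \<in> Hom X X'" "A_inflation C A f"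
    and g: "g \<in> Hom Y Q" "g \<cdot> i = i' \<cdot> f" "q \<cdot> g = p"
  shows "A_inflation C A g"
proof -
  obtain c where c: "(f, c) \<in> Conf" "tg c \<in> A" using f(2) unfolding A_inflation_def by blast
  have ch: "c \<in> Hom X' (tg c)" using conflation_typing[OF c(1)] f(1) by (auto simp: in_hom_iff)
  obtain P a d \<pi> where P: "pushout i' c a d X' Q (tg c) P" "\<pi> \<in> Hom P Z" "\<pi> \<cdot> d = q"
    "(a, \<pi>) \<in> Conf" "(i' \<cdot> f, d) \<in> Conf"
    by (rule pushout_conflations[OF iq c(1) f(1) ch c(2)])
  have ad: "a \<in> Hom (tg c) P" "d \<in> Hom Q P" "d \<cdot> i' = a \<cdot> c" using pushoutD[OF P(1)] by auto
  have cf: "c \<cdot> f = zr X (tg c)" using conflationD[OF c(1) f(1) ch] unfolding kernel_def by blast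
  have O: "X \<in> Ob" "P \<in> Ob" "Z \<in> Ob" using ip ad by (auto simp: in_hom_iff)
  have cok: "cokernel p i X Y Z" using conflationD[OF ip] by blast
  have "(d \<cdot> g) \<cdot> i = (d \<cdot> i') \<cdot> f" using ad(2) g f(1) ip(2) iq(2) by (simp add: in_hom_iff)
  also have "\<dots> = a \<cdot> (c \<cdot> f)" unfolding ad(3) using ad f(1) ch by (simp add: in_hom_iff)
  finally have "(d \<cdot> g) \<cdot> i = zr X P" using cf ad O by (simp add: in_hom_iff)
  moreover have "d \<cdot> g \<in> Hom Y P" using ad g by (auto simp: in_hom_iff)
  ultimately obtain \<sigma> where \<sigma>: "\<sigma> \<in> Hom Z P" "\<sigma> \<cdot> p = d \<cdot> g" using cokernel_desc[OF cok] by blast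
  have "(\<pi> \<cdot> \<sigma>) \<cdot> p = (\<pi> \<cdot> d) \<cdot> g" using \<sigma> P(2) ad(2) g(1) ip(3) by (simp add: in_hom_iff)
  also have "\<dots> = idn Z \<cdot> p" unfolding P(3) g(3) using ip(3) by (simp add: in_hom_iff)
  finally have "\<pi> \<cdot> \<sigma> = idn Z"
    using cokernel_cancel[OF cok, of "\<pi> \<cdot> \<sigma>" Z "idn Z"] \<sigma> P(2) O by (simp add: in_hom_iff)
  then obtain \<rho> where \<rho>: "biproduct C Z (tg c) P \<pi> \<rho> \<sigma> a"
    using split_conflation_biproduct conflationD[OF P(4) ad(1) P(2)] \<sigma>(1) by blast
  have "(g, \<rho> \<cdot> d) \<in> Conf"
    using kernel_comparison_conflation[OF ip P(5) _ ad(2) biproduct_kernel[OF \<rho>]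
        biproduct_proj_deflation[OF \<rho>] g(1,2) \<sigma>(2)[symmetric]] iq(2) f(1)
    by (auto simp: in_hom_iff)
  moreover have "tg (\<rho> \<cdot> d) = tg c" using biproductD[OF \<rho>] ad by (simp add: in_hom_iff)
  ultimately show ?thesis using c(2) unfolding A_inflation_def by auto
qed

lemma copair_pullback:
  assumes iq: "(i', q) \<in> Conf" "i' \<in> Hom X' Q" "q \<in> Hom Q Z"
    and u: "u \<in> Hom Y Q" and S: "biproduct C X' Y S x1 x2 e1 e2"
  defines "D \<equiv> i' \<cdot> x1 \<oplus> u \<cdot> x2"
  shows "pullback (q \<cdot> u) q D x2 Y Z Q S"
  unfolding pullback_def
proof (intro conjI allI impI)
  note b = biproductD[OF S] and bs = biproduct_simps[OF S]
  have ker: "kernel i' q X' Q Z" using conflationD[OF iq] by blast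
  have qi': "q \<cdot> i' = zr X' Z" using ker unfolding kernel_def by blast
  have O: "X' \<in> Ob" "Y \<in> Ob" "Z \<in> Ob" "Q \<in> Ob" using iq u by (auto simp: in_hom_iff)
  show "q \<cdot> u \<in> Hom Y Z" "q \<in> Hom Q Z" "D \<in> Hom S Q" "x2 \<in> Hom S Y"
    unfolding D_def using iq u b by (auto simp: in_hom_iff)
  show "(q \<cdot> u) \<cdot> x2 = q \<cdot> D" unfolding D_def
    using b(2-5) iq(2,3) u(1) cmp_assoc_eq[OF qi'] O by (simp add: in_hom_iff)
  fix W v w assume W: "W \<in> Ob" and v: "v \<in> Hom W Y" and w: "w \<in> Hom W Q"
    and e: "(q \<cdot> u) \<cdot> v = q \<cdot> w"
  have "q \<cdot> (w \<oplus> \<ominus>(u \<cdot> v)) = q \<cdot> w \<oplus> \<ominus>((q \<cdot> u) \<cdot> v)" using v w u iq(3) by (simp add: in_hom_iff)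
  also have "\<dots> = zr W Z" unfolding e using w iq(3) by (simp add: in_hom_iff)
  finally obtain a where a: "a \<in> Hom W X'" "i' \<cdot> a = w \<oplus> \<ominus>(u \<cdot> v)"
    using kernel_lift[OF ker, of "w \<oplus> \<ominus>(u \<cdot> v)" W] v w u by (auto simp: in_hom_iff)
  define z where "z = e1 \<cdot> a \<oplus> e2 \<cdot> v"
  have z: "z \<in> Hom W S" "x1 \<cdot> z = a" "x2 \<cdot> z = v"
    unfolding z_def using a(1) v b(2-5) bs W O by (auto simp: in_hom_iff)
  have Dz: "D \<cdot> z' = i' \<cdot> (x1 \<cdot> z') \<oplus> u \<cdot> (x2 \<cdot> z')" if "z' \<in> Hom W S" for z'
    unfolding D_def using that b(2-5) iq(2) u(1) by (simp add: in_hom_iff)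
  show "\<exists>!z. z \<in> Hom W S \<and> x2 \<cdot> z = v \<and> D \<cdot> z = w"
  proof (rule ex1I[of _ z])
    show "z \<in> Hom W S \<and> x2 \<cdot> z = v \<and> D \<cdot> z = w"
      using z Dz[of z] a(2) v w u(1) by (simp add: in_hom_iff)
    fix z' assume z': "z' \<in> Hom W S \<and> x2 \<cdot> z' = v \<and> D \<cdot> z' = w"
    then have "i' \<cdot> (x1 \<cdot> z') \<oplus> u \<cdot> v = w" using Dz[of z'] by simp
    then have "i' \<cdot> (x1 \<cdot> z') = w \<oplus> \<ominus>(u \<cdot> v)"
      using eq_diff_of_add[of "i' \<cdot> (x1 \<cdot> z')" "u \<cdot> v" w] z' v w b(2) iq(2) u(1)
      by (simp add: in_hom_iff)
    then have "x1 \<cdot> z' = a"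
      using kernel_cancel[OF ker, of "x1 \<cdot> z'" W a] a z' b(2) by (simp add: in_hom_iff)
    then show "z' = z" using biproduct_eq_into[OF S, of z' W z] z z' by simp
  qed
qed

lemma biproduct_shear_pullback:
  assumes f: "f \<in> Hom X X'" and a: "a \<in> Hom X Y"
    and S: "biproduct C X Y S q1 q2 f1 f2" and S': "biproduct C X' Y S' x1 x2 e1 e2"
  defines "\<mu> \<equiv> e1 \<cdot> (f \<cdot> q1) \<oplus> e2 \<cdot> (q2 \<oplus> \<ominus>(a \<cdot> q1))"
  shows "pullback f x1 \<mu> q1 X X' S' S"
  unfolding pullback_def
proof (intro conjI allI impI)
  note b = biproductD[OF S] and bs = biproduct_simps[OF S]
  note b' = biproductD[OF S'] and bs' = biproduct_simps[OF S']
  have O: "X \<in> Ob" "X' \<in> Ob" "Y \<in> Ob" "S \<in> Ob" "S' \<in> Ob"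
    using f a b(1) b'(1) by (auto simp: in_hom_iff)
  show "f \<in> Hom X X'" "x1 \<in> Hom S' X'" "\<mu> \<in> Hom S S'" "q1 \<in> Hom S X"
    unfolding \<mu>_def using f a b b' by (auto simp: in_hom_iff)
  show "f \<cdot> q1 = x1 \<cdot> \<mu>" unfolding \<mu>_def
    using b(2-5) b'(2-5) f a bs' O by (simp add: in_hom_iff)
  fix W u v assume W: "W \<in> Ob" and u: "u \<in> Hom W X" and v: "v \<in> Hom W S'"
    and e: "f \<cdot> u = x1 \<cdot> v"
  define w where "w = f1 \<cdot> u \<oplus> f2 \<cdot> (x2 \<cdot> v \<oplus> a \<cdot> u)"
  have w: "w \<in> Hom W S" "q1 \<cdot> w = u" "q2 \<cdot> w = x2 \<cdot> v \<oplus> a \<cdot> u"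
    unfolding w_def using u v a b(2-5) b'(2-5) bs W O by (auto simp: in_hom_iff)
  have \<mu>w: "\<mu> \<cdot> w' = e1 \<cdot> (f \<cdot> (q1 \<cdot> w')) \<oplus> e2 \<cdot> (q2 \<cdot> w' \<oplus> \<ominus>(a \<cdot> (q1 \<cdot> w')))"
    if "w' \<in> Hom W S" for w'
    unfolding \<mu>_def using that b(2-5) b'(2-5) a f by (simp add: in_hom_iff)
  have "\<mu> \<cdot> w = e1 \<cdot> (x1 \<cdot> v) \<oplus> e2 \<cdot> (x2 \<cdot> v)"
    unfolding \<mu>w[OF w(1)] w(2,3) e using u v a b'(2-5) by (simp add: in_hom_iff)
  also have "\<dots> = v" using biproduct_decomp[OF S' v] by simp
  finally have \<mu>w': "\<mu> \<cdot> w = v" .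
  show "\<exists>!w. w \<in> Hom W S \<and> q1 \<cdot> w = u \<and> \<mu> \<cdot> w = v"
  proof (rule ex1I[of _ w])
    show "w \<in> Hom W S \<and> q1 \<cdot> w = u \<and> \<mu> \<cdot> w = v" using w \<mu>w' by simp
    fix w' assume w': "w' \<in> Hom W S \<and> q1 \<cdot> w' = u \<and> \<mu> \<cdot> w' = v"
    then have w'h: "w' \<in> Hom W S" "q1 \<cdot> w' = u" "\<mu> \<cdot> w' = v" by auto
    have "x2 \<cdot> (\<mu> \<cdot> w') = q2 \<cdot> w' \<oplus> \<ominus>(a \<cdot> (q1 \<cdot> w'))"
      unfolding \<mu>w[OF w'h(1)] using w'h(1) b(2-5) b'(2-5) a f bs' O by (simp add: in_hom_iff)
    then have "q2 \<cdot> w' \<oplus> \<ominus>(a \<cdot> u) = x2 \<cdot> v" unfolding w'h(2,3) by simp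
    then have "q2 \<cdot> w' = x2 \<cdot> v \<oplus> a \<cdot> u"
      using eq_diff_of_add[of "q2 \<cdot> w'" "\<ominus>(a \<cdot> u)" "x2 \<cdot> v"] w'h(1) u v a b(3) b'(3)
      by (simp add: in_hom_iff)
    then show "w' = w" using biproduct_eq_into[OF S, of w' W w] w w' by simp
  qed
qed

lemma comparison_kernel:
  assumes ip: "(i, p) \<in> Conf" "i \<in> Hom X Y" "p \<in> Hom Y Z"
    and iq: "(i', q) \<in> Conf" "i' \<in> Hom X' Q" "q \<in> Hom Q Z"
    and jf: "kernel j f K X X'"
    and g: "g \<in> Hom Y Q" "g \<cdot> i = i' \<cdot> f" "q \<cdot> g = p"
  shows "kernel (i \<cdot> j) g K Y Q"
  unfolding kernel_def
proof (intro conjI allI impI)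
  have kip: "kernel i p X Y Z" and kiq: "kernel i' q X' Q Z" using conflationD ip iq by blast+
  have j: "j \<in> Hom K X" "f \<in> Hom X X'" "f \<cdot> j = zr K X'" using jf unfolding kernel_def by auto
  have O: "K \<in> Ob" "X' \<in> Ob" "Q \<in> Ob" "Z \<in> Ob" using j iq by (auto simp: in_hom_iff)
  show ij: "i \<cdot> j \<in> Hom K Y" "g \<in> Hom Y Q" using ip(2) j g(1) by (auto simp: in_hom_iff)
  have "g \<cdot> (i \<cdot> j) = i' \<cdot> (f \<cdot> j)"
    using g ip(2) iq(2) j(1,2) by (simp add: in_hom_iff flip: cmp_assoc)
  then show "g \<cdot> (i \<cdot> j) = zr K Q" using j(3) iq(2) O by (simp add: in_hom_iff)
  fix W t assume W: "W \<in> Ob" and t: "t \<in> Hom W Y" and gt: "g \<cdot> t = zr W Q"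
  have "p \<cdot> t = q \<cdot> (g \<cdot> t)" using g t iq(3) by (simp add: in_hom_iff flip: cmp_assoc)
  then have "p \<cdot> t = zr W Z" using gt iq(3) W by (simp add: in_hom_iff)
  then obtain x where x: "x \<in> Hom W X" "i \<cdot> x = t" using kernel_lift[OF kip t] by blast
  have "i' \<cdot> (f \<cdot> x) = g \<cdot> (i \<cdot> x)"
    using g ip(2) iq(2) j(2) x(1) by (simp add: in_hom_iff flip: cmp_assoc)
  also have "\<dots> = i' \<cdot> zr W X'" using x(2) gt iq(2) W by (simp add: in_hom_iff)
  finally have "f \<cdot> x = zr W X'"
    using kernel_cancel[OF kiq, of "f \<cdot> x" W "zr W X'"] x(1) j W O by (simp add: in_hom_iff)
  then obtain c where c: "c \<in> Hom W K" "j \<cdot> c = x" using kernel_lift[OF jf x(1)] by blast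
  show "\<exists>!c. c \<in> Hom W K \<and> (i \<cdot> j) \<cdot> c = t"
  proof (rule ex1I[of _ c])
    show "c \<in> Hom W K \<and> (i \<cdot> j) \<cdot> c = t" using c x ip(2) j by (simp add: in_hom_iff)
    fix c' assume "c' \<in> Hom W K \<and> (i \<cdot> j) \<cdot> c' = t"
    then have c': "c' \<in> Hom W K" "(i \<cdot> j) \<cdot> c' = t" by auto
    then have "i \<cdot> (j \<cdot> c') = i \<cdot> (j \<cdot> c)" using c x ip(2) j(1) by (simp add: in_hom_iff)
    then have "j \<cdot> c' = j \<cdot> c"
      using kernel_cancel[OF kip, of "j \<cdot> c'" W "j \<cdot> c"] c c' j(1) x(1) by (simp add: in_hom_iff)
    then show "c' = c" using kernel_cancel[OF jf] c c' by blast
  qed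
qed

lemma kernel_comp_biproduct_proj:
  assumes ker: "kernel m u M Y Q"
    and S: "biproduct C X Y S q1 q2 f1 f2" and T: "biproduct C X M T t1 t2 h1 h2"
  defines "k \<equiv> f1 \<cdot> t1 \<oplus> f2 \<cdot> (m \<cdot> t2)"
  shows "kernel k (u \<cdot> q2) T S Q"
  unfolding kernel_def
proof (intro conjI allI impI)
  note b = biproductD[OF S] and bs = biproduct_simps[OF S]
  note c = biproductD[OF T] and cs = biproduct_simps[OF T]
  have m: "m \<in> Hom M Y" "u \<in> Hom Y Q" "u \<cdot> m = zr M Q" using ker unfolding kernel_def by auto
  have O: "X \<in> Ob" "Y \<in> Ob" "M \<in> Ob" "Q \<in> Ob" "S \<in> Ob" "T \<in> Ob"
    using m b(1) c(1) b(2) by (auto simp: in_hom_iff)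
  show k: "k \<in> Hom T S" unfolding k_def using m b c by (auto simp: in_hom_iff)
  have q1k: "q1 \<cdot> k = t1" and q2k: "q2 \<cdot> k = m \<cdot> t2"
    unfolding k_def using m b(2-5) c(2-5) bs O by (simp_all add: in_hom_iff)
  show "u \<cdot> q2 \<in> Hom S Q" using m b by (auto simp: in_hom_iff)
  have "(u \<cdot> q2) \<cdot> k = (u \<cdot> m) \<cdot> t2" using q2k m(1,2) c(3) k b(3) by (simp add: in_hom_iff)
  then show "(u \<cdot> q2) \<cdot> k = zr T Q" using m c(3) O by (simp add: in_hom_iff)
  fix W z assume W: "W \<in> Ob" and z: "z \<in> Hom W S" and uz: "(u \<cdot> q2) \<cdot> z = zr W Q"
  have "q2 \<cdot> z \<in> Hom W Y" "u \<cdot> (q2 \<cdot> z) = zr W Q" using z uz b m by (auto simp: in_hom_iff)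
  then obtain e where e: "e \<in> Hom W M" "m \<cdot> e = q2 \<cdot> z" using kernel_lift[OF ker] by blast
  define w where "w = h1 \<cdot> (q1 \<cdot> z) \<oplus> h2 \<cdot> e"
  have w: "w \<in> Hom W T" "t1 \<cdot> w = q1 \<cdot> z" "t2 \<cdot> w = e"
    unfolding w_def using e(1) z b(2-5) c(2-5) cs W O by (auto simp: in_hom_iff)
  have kx: "q1 \<cdot> (k \<cdot> x) = t1 \<cdot> x" "q2 \<cdot> (k \<cdot> x) = m \<cdot> (t2 \<cdot> x)" if "x \<in> Hom W T" for x
    using cmp_assoc_eq[OF q1k, of x] cmp_assoc_eq[OF q2k, of x] that k b c m
    by (auto simp: in_hom_iff)
  show "\<exists>!w. w \<in> Hom W T \<and> k \<cdot> w = z"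
  proof (rule ex1I[of _ w])
    have "k \<cdot> w = z"
      using biproduct_eq_into[OF S, of "k \<cdot> w" W z] kx[OF w(1)] w e z k by (auto simp: in_hom_iff)
    then show "w \<in> Hom W T \<and> k \<cdot> w = z" using w by simp
    fix w' assume "w' \<in> Hom W T \<and> k \<cdot> w' = z"
    then have w': "w' \<in> Hom W T" "k \<cdot> w' = z" by auto
    have "t1 \<cdot> w' = t1 \<cdot> w" using kx[OF w'(1)] w'(2) w(2) by simp
    moreover have "m \<cdot> (t2 \<cdot> w') = m \<cdot> (t2 \<cdot> w)" using kx[OF w'(1)] w'(2) w(3) e(2) by simp
    then have "t2 \<cdot> w' = t2 \<cdot> w"
      using kernel_cancel[OF ker, of "t2 \<cdot> w'" W "t2 \<cdot> w"] w w' c by (auto simp: in_hom_iff)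
    ultimately show "w' = w" using biproduct_eq_into[OF T w'(1) w(1)] by simp
  qed
qed

lemma pushout_biproduct_proj:
  assumes m: "m \<in> Hom M Y"
    and S: "biproduct C X Y S q1 q2 f1 f2" and T: "biproduct C X M T t1 t2 h1 h2"
  defines "k \<equiv> f1 \<cdot> t1 \<oplus> f2 \<cdot> (m \<cdot> t2)"
  shows "pushout k t2 m q2 T S M Y"
  unfolding pushout_def
proof (intro conjI allI impI)
  note b = biproductD[OF S] and bs = biproduct_simps[OF S]
  note c = biproductD[OF T] and cs = biproduct_simps[OF T]
  have O: "X \<in> Ob" "Y \<in> Ob" "M \<in> Ob" "S \<in> Ob" "T \<in> Ob"
    using m b(1) c(1) b(2) by (auto simp: in_hom_iff)
  show k: "k \<in> Hom T S" unfolding k_def using m b c by (auto simp: in_hom_iff)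
  show "t2 \<in> Hom T M" "m \<in> Hom M Y" "q2 \<in> Hom S Y" using c m b by auto
  show "q2 \<cdot> k = m \<cdot> t2" unfolding k_def using m b(2-5) c(2-5) bs O by (simp add: in_hom_iff)
  fix W u v assume W: "W \<in> Ob" and u: "u \<in> Hom S W" and v: "v \<in> Hom M W" and e: "u \<cdot> k = v \<cdot> t2"
  have kh1: "k \<cdot> h1 = f1" and kh2: "k \<cdot> h2 = f2 \<cdot> m"
    unfolding k_def using m b(2-5) c(2-5) cs O by (simp_all add: in_hom_iff)
  have "u \<cdot> f1 = v \<cdot> (t2 \<cdot> h1)"
    using cmp_assoc_eq[OF e, of h1] kh1 u k v c by (simp add: in_hom_iff)
  then have uf1: "u \<cdot> f1 = zr X W" using c v O by (simp add: in_hom_iff)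
  have "u \<cdot> (f2 \<cdot> m) = v \<cdot> (t2 \<cdot> h2)"
    using cmp_assoc_eq[OF e, of h2] kh2 u k v c by (simp add: in_hom_iff)
  then have uf2m: "(u \<cdot> f2) \<cdot> m = v" using c v u b m by (simp add: in_hom_iff)
  have "u = u \<cdot> (f1 \<cdot> q1) \<oplus> u \<cdot> (f2 \<cdot> q2)" using biproduct_decomp_out[OF S u] .
  also have "u \<cdot> (f1 \<cdot> q1) = zr S W"
    using cmp_assoc_eq[OF uf1, of q1] u b W O by (simp add: in_hom_iff)
  finally have uf2q2: "(u \<cdot> f2) \<cdot> q2 = u" using u b W by (simp add: in_hom_iff)
  show "\<exists>!w. w \<in> Hom Y W \<and> w \<cdot> q2 = u \<and> w \<cdot> m = v"
  proof (rule ex1I[of _ "u \<cdot> f2"])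
    show "u \<cdot> f2 \<in> Hom Y W \<and> (u \<cdot> f2) \<cdot> q2 = u \<and> (u \<cdot> f2) \<cdot> m = v"
      using u b uf2q2 uf2m by (auto simp: in_hom_iff)
    fix w assume "w \<in> Hom Y W \<and> w \<cdot> q2 = u \<and> w \<cdot> m = v"
    then have w: "w \<in> Hom Y W" "w \<cdot> q2 = u" by auto
    have "w = (w \<cdot> q2) \<cdot> f2" using w(1) b by (simp add: in_hom_iff)
    then show "w = u \<cdot> f2" using w(2) by simp
  qed
qed

lemma cokernel_comp_biproduct_proj:
  assumes cok: "cokernel (u \<cdot> q2) k T S Q"
    and m: "m \<in> Hom M Y" "u \<in> Hom Y Q" "u \<cdot> m = zr M Q"
    and S: "biproduct C X Y S q1 q2 f1 f2" and T: "biproduct C X M T t1 t2 h1 h2"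
    and k: "k = f1 \<cdot> t1 \<oplus> f2 \<cdot> (m \<cdot> t2)"
  shows "cokernel u m M Y Q"
  unfolding cokernel_def
proof (intro conjI allI impI)
  note b = biproductD[OF S] and bs = biproduct_simps[OF S]
  note c = biproductD[OF T]
  have O: "X \<in> Ob" "M \<in> Ob" "S \<in> Ob" "T \<in> Ob" using m b(1) c(1) b(2) by (auto simp: in_hom_iff)
  show "m \<in> Hom M Y" "u \<in> Hom Y Q" "u \<cdot> m = zr M Q" using m by auto
  have kh: "k \<in> Hom T S" "q2 \<cdot> k = m \<cdot> t2" unfolding k
    using m b(2-5) c(2-5) bs O by (auto simp: in_hom_iff)
  fix W t assume W: "W \<in> Ob" and t: "t \<in> Hom Y W" and tm: "t \<cdot> m = zr M W"
  have "(t \<cdot> q2) \<cdot> k = (t \<cdot> m) \<cdot> t2" using kh t m(1) b(3) c(3) by (simp add: in_hom_iff)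
  then have "(t \<cdot> q2) \<cdot> k = zr T W" using tm c(3) W by (simp add: in_hom_iff)
  moreover have "t \<cdot> q2 \<in> Hom S W" using t b by (auto simp: in_hom_iff)
  ultimately obtain v where v: "v \<in> Hom Q W" "v \<cdot> (u \<cdot> q2) = t \<cdot> q2"
    using cokernel_desc[OF cok] by blast
  have vu: "v \<cdot> u = t"
  proof -
    have "v \<cdot> u = (v \<cdot> (u \<cdot> q2)) \<cdot> f2" using v(1) m(2) b bs by (simp add: in_hom_iff)
    also have "\<dots> = t" unfolding v(2) using t b bs by (simp add: in_hom_iff)
    finally show ?thesis .
  qed
  show "\<exists>!v. v \<in> Hom Q W \<and> v \<cdot> u = t"
  proof (rule ex1I[of _ v])
    show "v \<in> Hom Q W \<and> v \<cdot> u = t" using v vu by simp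
    fix v' assume "v' \<in> Hom Q W \<and> v' \<cdot> u = t"
    then have v': "v' \<in> Hom Q W" "v' \<cdot> u = t" by auto
    have "v' \<cdot> (u \<cdot> q2) = v \<cdot> (u \<cdot> q2)"
      using cmp_assoc_eq[OF v'(2), of q2] cmp_assoc_eq[OF vu, of q2] v v' m(2) b
      by (simp add: in_hom_iff)
    then show "v' = v" using cokernel_cancel[OF cok v'(1) v(1)] by blast
  qed
qed

text \<open>The composite \<open>X \<oplus> Y \<rightarrow> Y \<rightarrow> Q\<close> factors as the shear map \<open>X \<oplus> Y \<rightarrow> X' \<oplus> Y\<close>,
  a pullback of \<open>f\<close>, followed by \<open>[i', g] : X' \<oplus> Y \<rightarrow> Q\<close>, a pullback of \<open>p\<close>.\<close>

lemma comparison_comp_proj_deflation: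
  assumes ip: "(i, p) \<in> Conf" "i \<in> Hom X Y" "p \<in> Hom Y Z"
    and iq: "(i', q) \<in> Conf" "i' \<in> Hom X' Q" "q \<in> Hom Q Z"
    and f: "deflation C f" "f \<in> Hom X X'"
    and g: "g \<in> Hom Y Q" "g \<cdot> i = i' \<cdot> f" "q \<cdot> g = p"
    and S: "biproduct C X Y S q1 q2 f1 f2"
  shows "deflation C (g \<cdot> q2)"
proof -
  have O: "X' \<in> Ob" "Y \<in> Ob" using f(2) ip(2) by (auto simp: in_hom_iff)
  obtain S' x1 x2 e1 e2 where S': "biproduct C X' Y S' x1 x2 e1 e2"
    using biproduct_exists O by blast
  note b = biproductD[OF S] and b' = biproductD[OF S']
  define \<mu> where "\<mu> = e1 \<cdot> (f \<cdot> q1) \<oplus> e2 \<cdot> (q2 \<oplus> \<ominus>(i \<cdot> q1))"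
  have "deflation C (q \<cdot> g)" using conflation_deflation[OF ip(1)] g(3) by simp
  then have "deflation C (i' \<cdot> x1 \<oplus> g \<cdot> x2)"
    using pullback_deflation[OF copair_pullback[OF iq g(1) S']] by blast
  moreover have "deflation C \<mu>"
    using pullback_deflation[OF biproduct_shear_pullback[OF f(2) ip(2) S S'] f(1)] unfolding \<mu>_def .
  moreover have "tg \<mu> = sr (i' \<cdot> x1 \<oplus> g \<cdot> x2)"
    unfolding \<mu>_def using b b' f(2) ip(2) iq(2) g(1) by (simp add: in_hom_iff)
  ultimately have "deflation C ((i' \<cdot> x1 \<oplus> g \<cdot> x2) \<cdot> \<mu>)" using deflation_comp by blast
  moreover have "(i' \<cdot> x1 \<oplus> g \<cdot> x2) \<cdot> \<mu> = i' \<cdot> (f \<cdot> q1) \<oplus> (g \<cdot> q2 \<oplus> \<ominus>(g \<cdot> (i \<cdot> q1)))"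
    unfolding \<mu>_def using b b' ip(2) f(2) iq(2) g(1) biproduct_simps[OF S'] O
    by (simp add: in_hom_iff)
  moreover have "g \<cdot> (i \<cdot> q1) = i' \<cdot> (f \<cdot> q1)"
    using g ip(2) f(2) iq(2) b(2) by (simp add: in_hom_iff flip: cmp_assoc)
  ultimately show ?thesis using b(2,3) f(2) iq(2) g(1) by (simp add: in_hom_iff)
qed

lemma comparison_A_deflation:
  assumes ip: "(i, p) \<in> Conf" "i \<in> Hom X Y" "p \<in> Hom Y Z"
    and iq: "(i', q) \<in> Conf" "i' \<in> Hom X' Q" "q \<in> Hom Q Z"
    and f: "f \<in> Hom X X'" "A_deflation C A f"
    and g: "g \<in> Hom Y Q" "g \<cdot> i = i' \<cdot> f" "q \<cdot> g = p"
  shows "A_deflation C A g"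
proof -
  obtain j where j: "(j, f) \<in> Conf" "sr j \<in> A" using f(2) unfolding A_deflation_def by blast
  define K where "K = sr j"
  have jh: "j \<in> Hom K X" using conflation_typing[OF j(1)] f(1) K_def by (auto simp: in_hom_iff)
  have O: "X \<in> Ob" "Y \<in> Ob" "K \<in> Ob" using ip jh by (auto simp: in_hom_iff)
  obtain S q1 q2 f1 f2 where S: "biproduct C X Y S q1 q2 f1 f2" using biproduct_exists O by blast
  obtain T t1 t2 h1 h2 where T: "biproduct C X K T t1 t2 h1 h2" using biproduct_exists O by blast
  note b = biproductD[OF S] and c = biproductD[OF T]
  have ker: "kernel (i \<cdot> j) g K Y Q"
    using comparison_kernel[OF ip iq _ g] conflationD[OF j(1) jh f(1)] by blast
  define k where "k = f1 \<cdot> t1 \<oplus> f2 \<cdot> ((i \<cdot> j) \<cdot> t2)"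
  have ij: "i \<cdot> j \<in> Hom K Y" "g \<cdot> (i \<cdot> j) = zr K Q" using ker unfolding kernel_def by auto
  have kh: "k \<in> Hom T S" unfolding k_def using ij b c by (auto simp: in_hom_iff)
  have gq: "g \<cdot> q2 \<in> Hom S Q" using g(1) b by (auto simp: in_hom_iff)
  have "deflation C (g \<cdot> q2)"
    using comparison_comp_proj_deflation[OF ip iq conflation_deflation[OF j(1)] f(1) g S] .
  then have kd: "(k, g \<cdot> q2) \<in> Conf"
    using kernel_conflation gq kernel_comp_biproduct_proj[OF ker S T] unfolding k_def by blast
  obtain P a' b' where "pushout k t2 a' b' T S K P" "inflation C a'"
    using pushout_A_deflation_exists[OF conflation_inflation[OF kd]
        biproduct_proj_deflation[OF T] kh c(3)] j(2) K_def by blast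
  then have "inflation C (i \<cdot> j)"
    using pushout_inflation pushout_biproduct_proj[OF ij(1) S T] unfolding k_def by blast
  moreover have "cokernel g (i \<cdot> j) K Y Q"
    using cokernel_comp_biproduct_proj[OF _ ij(1) g(1) ij(2) S T k_def] conflationD[OF kd kh gq]
    by blast
  ultimately have "(i \<cdot> j, g) \<in> Conf" using cokernel_conflation ij(1) by blast
  moreover have "sr (i \<cdot> j) = K" using ij(1) by (auto simp: in_hom_iff)
  ultimately show ?thesis using j(2) K_def unfolding A_deflation_def by auto
qed

section \<open>The general comparison morphism\<close>

context
  fixes X Y Z X' Y' Z' :: 'o and i p i' p' f g h :: 'm
  assumes ip: "(i, p) \<in> Conf" and ip': "(i', p') \<in> Conf"
    and i: "i \<in> Hom X Y" and p: "p \<in> Hom Y Z" and i': "i' \<in> Hom X' Y'" and p': "p' \<in> Hom Y' Z'"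
    and f: "f \<in> Hom X X'" and g: "g \<in> Hom Y Y'" and h: "h \<in> Hom Z Z'"
    and gi: "g \<cdot> i = i' \<cdot> f" and hp: "h \<cdot> p = p' \<cdot> g"
begin

lemma factor_through_pullback:
  obtains Q q h' i2 g1 where "pullback p' h q h' Y' Z' Z Q"
    "(i2, q) \<in> Conf" "i2 \<in> Hom X' Q" "q \<in> Hom Q Z" "h' \<in> Hom Q Y'"
    "g1 \<in> Hom Y Q" "g = h' \<cdot> g1" "g1 \<cdot> i = i2 \<cdot> f" "q \<cdot> g1 = p"
proof -
  obtain Q q h' where Q: "pullback p' h q h' Y' Z' Z Q" "deflation C q"
    using pullback_deflation_exists[OF conflation_deflation[OF ip'] p' h] by blast
  have qh: "q \<in> Hom Q Z" "h' \<in> Hom Q Y'" using pullbackD[OF Q(1)] by auto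
  obtain i2 where i2: "i2 \<in> Hom X' Q" "h' \<cdot> i2 = i'" "q \<cdot> i2 = zr X' Z" "(i2, q) \<in> Conf"
    using pullback_kernel_conflation[OF ip' i' Q] by blast
  obtain g1 where g1: "g1 \<in> Hom Y Q" "h' \<cdot> g1 = g" "q \<cdot> g1 = p"
    using pullback_lift[OF Q(1) g p hp[symmetric]] by blast
  have pi_zero: "p \<cdot> i = zr X Z" using conflationD[OF ip i p] unfolding kernel_def by blast
  have O: "X \<in> Ob" "Z \<in> Ob" using i p by (auto simp: in_hom_iff)
  have "g1 \<cdot> i = i2 \<cdot> f"
  proof (rule pullback_uniq[OF Q(1)])
    show "g1 \<cdot> i \<in> Hom X Q" "i2 \<cdot> f \<in> Hom X Q" using g1(1) i i2(1) f by (auto simp: in_hom_iff)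
    show "h' \<cdot> (g1 \<cdot> i) = h' \<cdot> (i2 \<cdot> f)"
      using g1 i i2 f qh gi by (simp add: in_hom_iff flip: cmp_assoc)
    have "q \<cdot> (g1 \<cdot> i) = zr X Z" using g1 i qh pi_zero by (simp add: in_hom_iff flip: cmp_assoc)
    also have "\<dots> = q \<cdot> (i2 \<cdot> f)" using i2 f qh O by (simp add: in_hom_iff flip: cmp_assoc)
    finally show "q \<cdot> (g1 \<cdot> i) = q \<cdot> (i2 \<cdot> f)" .
  qed
  then show ?thesis using that Q(1) i2 qh g1 by blast
qed

lemma inflation_comparison:
  assumes "inflation C h" "A_inflation C A f"
  shows "inflation C g" and "A_inflation C A h \<Longrightarrow> A_inflation C A g"
proof -
  obtain Q q h' i2 g1 where Q: "pullback p' h q h' Y' Z' Z Q"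
    "(i2, q) \<in> Conf" "i2 \<in> Hom X' Q" "q \<in> Hom Q Z" "h' \<in> Hom Q Y'"
    "g1 \<in> Hom Y Q" "g = h' \<cdot> g1" "g1 \<cdot> i = i2 \<cdot> f" "q \<cdot> g1 = p"
    by (rule factor_through_pullback)
  have g1: "A_inflation C A g1" using comparison_A_inflation[OF ip i p Q(2-4) f assms(2) Q(6,8,9)] .
  have h': "(h', e \<cdot> p') \<in> Conf" if "(h, e) \<in> Conf" for e
  proof -
    have e: "e \<in> Hom Z' (tg e)" using conflation_typing[OF that] h by (auto simp: in_hom_iff)
    have "deflation C (e \<cdot> p')"
      using deflation_comp conflation_deflation[OF ip'] conflation_deflation[OF that] p' e
      by (simp add: in_hom_iff)
    moreover have "e \<cdot> p' \<in> Hom Y' (tg e)" using p' e by (auto simp: in_hom_iff)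
    ultimately show ?thesis
      using kernel_conflation pullback_kernel_comp[OF Q(1)] conflationD[OF that h e] by blast
  qed
  have g1h': "tg g1 = sr h'" using Q(5,6) by (simp add: in_hom_iff)
  show "inflation C g"
    using A_inflation_comp(1)[OF g1 _ g1h'] h' assms(1) Q(7) unfolding inflation_def by blast
  show "A_inflation C A g" if hA: "A_inflation C A h"
  proof -
    obtain e where e: "(h, e) \<in> Conf" "tg e \<in> A" using hA unfolding A_inflation_def by blast
    have "tg (e \<cdot> p') = tg e" using conflation_typing[OF e(1)] h p' by (simp add: in_hom_iff)
    then have "A_inflation C A h'" using h'[OF e(1)] e(2) unfolding A_inflation_def by auto
    then show ?thesis
      using A_inflation_comp(2)[OF g1 _ g1h'] Q(7) unfolding A_inflation_def inflation_def by blast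
  qed
qed

lemma deflation_comparison:
  assumes "deflation C h" "A_deflation C A f"
  shows "deflation C g" and "A_deflation C A h \<Longrightarrow> A_deflation C A g"
proof -
  obtain Q q h' i2 g1 where Q: "pullback p' h q h' Y' Z' Z Q"
    "(i2, q) \<in> Conf" "i2 \<in> Hom X' Q" "q \<in> Hom Q Z" "h' \<in> Hom Q Y'"
    "g1 \<in> Hom Y Q" "g = h' \<cdot> g1" "g1 \<cdot> i = i2 \<cdot> f" "q \<cdot> g1 = p"
    by (rule factor_through_pullback)
  have g1: "A_deflation C A g1" using comparison_A_deflation[OF ip i p Q(2-4) f assms(2) Q(6,8,9)] .
  have g1h': "tg g1 = sr h'" using Q(5,6) by (simp add: in_hom_iff)
  note pb = pullback_swap[OF Q(1)]
  show "deflation C g"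
    using deflation_comp g1 pullback_deflation[OF pb assms(1)] g1h' Q(7)
    unfolding A_deflation_def deflation_def by blast
  show "A_deflation C A g" if "A_deflation C A h"
    using A_deflation_comp[OF g1 pullback_A_deflation[OF pb that] g1h'] Q(7) by simp
qed

end

end

theorem mainTheorem13:
  fixes C :: "('o,'m) ccat" and A :: "'o set"
    and X Y Z X' Y' Z' :: 'o and i p i' p' f g h :: 'm
  assumes "deflation_exact C"
    and "admissibly_deflation_percolating C A"
    and "(i, p) \<in> conflations C" and "(i', p') \<in> conflations C"
    and "i \<in> hom C X Y" and "p \<in> hom C Y Z"
    and "i' \<in> hom C X' Y'" and "p' \<in> hom C Y' Z'"
    and "f \<in> hom C X X'" and "g \<in> hom C Y Y'" and "h \<in> hom C Z Z'"
    and "cmp C g i = cmp C i' f" and "cmp C h p = cmp C p' g"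
  shows "(inflation C f \<and> inflation C h \<and> A_inflation C A f \<longrightarrow> inflation C g)
       \<and> (inflation C f \<and> inflation C h \<and> A_inflation C A f \<and> A_inflation C A h
            \<longrightarrow> A_inflation C A g)
       \<and> (deflation C f \<and> deflation C h \<and> A_deflation C A f \<longrightarrow> deflation C g)
       \<and> (deflation C f \<and> deflation C h \<and> A_deflation C A f \<and> A_deflation C A h
            \<longrightarrow> A_deflation C A g)"
proof -
  \<comment> \<open>\<open>inflation C f\<close> and \<open>deflation C f\<close> are redundant: they follow from the
    hypotheses \<open>A_inflation C A f\<close> and \<open>A_deflation C A f\<close>.\<close>
  interpret percolating_deflation_exact C A using assms(1,2) by unfold_locales
  note infl = inflation_comparison[OF assms(3-13)]
    and defl = deflation_comparison[OF assms(3-13)]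
  show ?thesis using infl defl by blast
qed

end
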